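(* (i) The pair $(\leq_{\boldsymbol\Sigma^1_1},\not\subseteq_{\boldsymbol\Sigma^1_1})$ on $\mathfrak T$ is complete for the class $\mathcal C_{\rm qo}$ of analytic quasiorders on standard Borel spaces. (ii) The pair $(\equiv_{\boldsymbol\Sigma^1_1},\mathrm{Disj}_{\boldsymbol\Sigma^1_1})$ on $\mathfrak T$ is complete for the class $\mathcal C_{\rm eq}$ of analytic equivalence relations on standard Borel spaces. Consequently the pair $(\equiv_{\boldsymbol\Sigma^1_1},\neq_{\boldsymbol\Sigma^1_1})$ is also complete for $\mathcal C_{\rm eq}$.
   Context: For finite sequences $s,t\in\omega^{<\omega}$, $s\le t$ means $|s|=|t|$ and $s(i)\le t(i)$ for all $i<|s|$; for $|s|=|t|$, $(s+t)(i)=s(i)+t(i)$. A normal tree on $2\times\omega$ is a set $T$ of pairs $(u,s)\in 2^{<\omega}\times\omega^{<\omega}$ with $|u|=|s|$, containing $(\emptyset,\emptyset)$, closed under taking initial segments (in both coordinates simultaneously), and such that $(u,s)\in T$ and $s\le t$ imply $(u,t)\in T$. $\mathfrak T$ denotes the set of normal trees, a closed (compact Polish) subset of $2^{(2\times\omega)^{<\omega}}$. For $T\in\mathfrak T$, $A(T)=\{\alpha\in 2^\omega:\exists\beta\in\omega^\omega\,\forall n\,(\alpha|_n,\beta|_n)\in T\}$. Relations on $\mathfrak T$: $S\le_{\boldsymbol\Sigma^1_1}T$ iff $\exists\alpha\in\omega^\omega\,\forall(u,s)\,((u,s)\in S\Rightarrow (u,s+\alpha|_{|s|})\in T)$; $S\equiv_{\boldsymbol\Sigma^1_1}T$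 iff $S\le_{\boldsymbol\Sigma^1_1}T$ and $T\le_{\boldsymbol\Sigma^1_1}S$; $S\not\subseteq_{\boldsymbol\Sigma^1_1}T$ iff $A(S)\not\subseteq A(T)$; $S\,\mathrm{Disj}_{\boldsymbol\Sigma^1_1}T$ iff $A(S)\ne\emptyset$, $A(T)\neq\emptyset$ and $A(S)\cap A(T)=\emptyset$; $S\neq_{\boldsymbol\Sigma^1_1}T$ iff $A(S)\ne A(T)$. For pairs $(R_1,R_2)$ of binary relations on a standard Borel space $X$ and $(S_1,S_2)$ on $Y$, a Borel homomorphism is a Borel $f:X\to Y$ with $xR_1y\Rightarrow f(x)S_1f(y)$ and $xR_2y\Rightarrow f(x)S_2f(y)$. A binary relation $R$ is identified with the pair $(R,\neg R)$. For a class $\mathcal C$ of binary relations on standard Borel spaces, a pair $(R_1,R_2)$ is $\mathcal C$-complete if (a) for every $R\in\mathcal C$ there is a Borel homomorphism from $(R,\neg R)$ to $(R_1,R_2)$, and (b) there is some $R\in\mathcal C$ and a Borel homomorphism from $(R_1,R_2)$ to $(R,\neg R)$. *)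

theory Defs
  imports "HOL-Analysis.Analysis"
begin

definition standard_borel :: "'a measure \<Rightarrow> bool" where
  "standard_borel M \<longleftrightarrow>
     (\<exists>X. completely_metrizable_space X \<and> separable_space X \<and> topspace X = space M \<and>
          sets M = sigma_sets (space M) {U. openin X U})"

definition analytic_set :: "'a measure \<Rightarrow> 'a set \<Rightarrow> bool" where
  "analytic_set M A \<longleftrightarrow> A \<subseteq> space M \<and>
     (A = {} \<or> (\<exists>f. f \<in> measurable (borel :: (nat \<Rightarrow> nat) measure) M \<and> range f = A))"

definition rel_graph :: "'a measure \<Rightarrow> ('a \<Rightarrow> 'a \<Rightarrow> bool) \<Rightarrow> ('a \<times> 'a) set" where
  "rel_graph M R = {(x, y). x \<in> space M \<and> y \<in> space M \<and> R x y}"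

definition analytic_rel :: "'a measure \<Rightarrow> ('a \<Rightarrow> 'a \<Rightarrow> bool) \<Rightarrow> bool" where
  "analytic_rel M R \<longleftrightarrow> analytic_set (M \<Otimes>\<^sub>M M) (rel_graph M R)"

definition quasiorder_on :: "'a set \<Rightarrow> ('a \<Rightarrow> 'a \<Rightarrow> bool) \<Rightarrow> bool" where
  "quasiorder_on X R \<longleftrightarrow> (\<forall>x\<in>X. R x x) \<and>
     (\<forall>x\<in>X. \<forall>y\<in>X. \<forall>z\<in>X. R x y \<longrightarrow> R y z \<longrightarrow> R x z)"

definition equivalence_on :: "'a set \<Rightarrow> ('a \<Rightarrow> 'a \<Rightarrow> bool) \<Rightarrow> bool" where
  "equivalence_on X R \<longleftrightarrow> quasiorder_on X R \<and> (\<forall>x\<in>X. \<forall>y\<in>X. R x y \<longrightarrow> R y x)"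

definition C_qo :: "'a measure \<Rightarrow> ('a \<Rightarrow> 'a \<Rightarrow> bool) \<Rightarrow> bool" where
  "C_qo M R \<longleftrightarrow> standard_borel M \<and> quasiorder_on (space M) R \<and> analytic_rel M R"

definition C_eq :: "'a measure \<Rightarrow> ('a \<Rightarrow> 'a \<Rightarrow> bool) \<Rightarrow> bool" where
  "C_eq M R \<longleftrightarrow> standard_borel M \<and> equivalence_on (space M) R \<and> analytic_rel M R"

definition borel_hom ::
  "'a measure \<Rightarrow> ('a \<Rightarrow> 'a \<Rightarrow> bool) \<Rightarrow> ('a \<Rightarrow> 'a \<Rightarrow> bool) \<Rightarrow>
   'b measure \<Rightarrow> ('b \<Rightarrow> 'b \<Rightarrow> bool) \<Rightarrow> ('b \<Rightarrow> 'b \<Rightarrow> bool) \<Rightarrow> ('a \<Rightarrow> 'b) \<Rightarrow> bool" where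
  "borel_hom X R1 R2 Y S1 S2 f \<longleftrightarrow> f \<in> measurable X Y \<and>
     (\<forall>x\<in>space X. \<forall>y\<in>space X. (R1 x y \<longrightarrow> S1 (f x) (f y)) \<and> (R2 x y \<longrightarrow> S2 (f x) (f y)))"

type_synonym tree = "(bool list \<times> nat list) set"

definition seq_le :: "nat list \<Rightarrow> nat list \<Rightarrow> bool" where
  "seq_le s t \<longleftrightarrow> length s = length t \<and> (\<forall>i<length s. s ! i \<le> t ! i)"

definition normal_tree :: "tree \<Rightarrow> bool" where
  "normal_tree T \<longleftrightarrow>
     ([], []) \<in> T \<and>
     (\<forall>u s. (u, s) \<in> T \<longrightarrow> length u = length s) \<and>
     (\<forall>u s n. (u, s) \<in> T \<longrightarrow> (take n u, take n s) \<in> T) \<and>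
     (\<forall>u s t. (u, s) \<in> T \<longrightarrow> seq_le s t \<longrightarrow> (u, t) \<in> T)"

definition NTrees :: "tree set" where
  "NTrees = {T. normal_tree T}"

text \<open>The space of normal trees with the Borel structure inherited from the product
(Cantor) topology on 2^((2 x omega)^<omega): generated by the evaluation sets.\<close>
definition Tspace :: "tree measure" where
  "Tspace = sigma NTrees {{T \<in> NTrees. p \<in> T} | p. True}"

definition restr :: "(nat \<Rightarrow> 'x) \<Rightarrow> nat \<Rightarrow> 'x list" where
  "restr \<alpha> n = map \<alpha> [0..<n]"

definition A_of :: "tree \<Rightarrow> (nat \<Rightarrow> bool) set" where
  "A_of T = {\<alpha>. \<exists>\<beta> :: nat \<Rightarrow> nat. \<forall>n. (restr \<alpha> n, restr \<beta> n) \<in> T}"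

definition seq_add :: "nat list \<Rightarrow> nat list \<Rightarrow> nat list" where
  "seq_add s t = map (\<lambda>i. s ! i + t ! i) [0..<length s]"

definition le_S :: "tree \<Rightarrow> tree \<Rightarrow> bool" where
  "le_S S T \<longleftrightarrow> (\<exists>\<alpha> :: nat \<Rightarrow> nat. \<forall>u s. (u, s) \<in> S \<longrightarrow> (u, seq_add s (restr \<alpha> (length s))) \<in> T)"

definition eq_S :: "tree \<Rightarrow> tree \<Rightarrow> bool" where
  "eq_S S T \<longleftrightarrow> le_S S T \<and> le_S T S"

definition nsub_S :: "tree \<Rightarrow> tree \<Rightarrow> bool" where
  "nsub_S S T \<longleftrightarrow> \<not> (A_of S \<subseteq> A_of T)"

definition disj_S :: "tree \<Rightarrow> tree \<Rightarrow> bool" where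
  "disj_S S T \<longleftrightarrow> A_of S \<noteq> {} \<and> A_of T \<noteq> {} \<and> A_of S \<inter> A_of T = {}"

definition neq_S :: "tree \<Rightarrow> tree \<Rightarrow> bool" where
  "neq_S S T \<longleftrightarrow> A_of S \<noteq> A_of T"

text \<open>Clause (a) quantifies over all types (the type variable is universally
quantified at theorem level); clause (b) asks for a witness space carried by a subset
of the type tree (which has continuum cardinality, so every standard Borel space is
isomorphic to one of these).\<close>
definition complete_a ::
  "('a measure \<Rightarrow> ('a \<Rightarrow> 'a \<Rightarrow> bool) \<Rightarrow> bool) \<Rightarrow> (tree \<Rightarrow> tree \<Rightarrow> bool) \<Rightarrow> (tree \<Rightarrow> tree \<Rightarrow> bool) \<Rightarrow> bool" where
  "complete_a C R1 R2 \<longleftrightarrow> (\<forall>M R. C M R \<longrightarrow>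
      (\<exists>f. borel_hom M R (\<lambda>x y. \<not> R x y) Tspace R1 R2 f))"

definition complete_b ::
  "(tree measure \<Rightarrow> (tree \<Rightarrow> tree \<Rightarrow> bool) \<Rightarrow> bool) \<Rightarrow> (tree \<Rightarrow> tree \<Rightarrow> bool) \<Rightarrow> (tree \<Rightarrow> tree \<Rightarrow> bool) \<Rightarrow> bool" where
  "complete_b C R1 R2 \<longleftrightarrow> (\<exists>M R. C M R \<and>
      (\<exists>g. borel_hom Tspace R1 R2 M R (\<lambda>x y. \<not> R x y) g))"

end

theory Submission
  imports Defs
begin

text \<open>
  A countable separating
  family of Borel sets codes \<open>X\<close> injectively by a map \<open>e\<close> into the Cantor space, and the image
  of \<open>R\<close> under \<open>e\<close> is the projection of a closed set \<open>\<Phi>\<close> of triples \<open>(a, b, w)\<close>, because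
  Borel subsets of the Baire space are Suslin. Send \<open>x\<close> to the normal tree of all \<open>(u, s)\<close>
  such that \<open>u\<close> is joined to the restriction of \<open>e x\<close> by a finite chain of prefixes of
  \<open>\<Phi>\<close>-branches whose witnesses and length are bounded by \<open>s\<close>. One more \<open>\<Phi>\<close>-step costs only a
  shift of \<open>s\<close>, so \<open>R\<close> is mapped into \<open>\<le>\<^sub>\<Sigma>\<close>. Conversely, bounding the length of the chains
  makes them finitely many below each \<open>s\<close>, so Koenig's lemma and the closedness of \<open>\<Phi>\<close> show
  that the projection of the tree of \<open>x\<close> is the set of codes of \<open>R\<close>-predecessors of \<open>x\<close>.
  Hence \<open>\<not> R\<close> is mapped into \<open>\<not>\<subseteq>\<^sub>\<Sigma>\<close>, and for an equivalence relation into disjointness.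
  The reverse reductions are the identity: \<open>\<le>\<^sub>\<Sigma>\<close> is an analytic quasiorder on the standard
  Borel space of normal trees and implies inclusion of projections.
\<close>

section \<open>Closed sets and Suslin sets of sequences\<close>

text \<open>Closedness in the product topology on sequences, each coordinate carrying the discrete
topology.\<close>
definition closed_seq_pred :: "((nat \<Rightarrow> 'a) \<Rightarrow> bool) \<Rightarrow> bool" where
  "closed_seq_pred \<Phi> \<longleftrightarrow> (\<forall>f. (\<forall>n. \<exists>g. \<Phi> g \<and> (\<forall>i<n. g i = f i)) \<longrightarrow> \<Phi> f)"

lemma closed_seq_predI:
  "(\<And>f. (\<And>n. \<exists>g. \<Phi> g \<and> (\<forall>i<n. g i = f i)) \<Longrightarrow> \<Phi> f) \<Longrightarrow> closed_seq_pred \<Phi>"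
  unfolding closed_seq_pred_def by blast

lemma closed_seq_predD:
  "closed_seq_pred \<Phi> \<Longrightarrow> (\<And>n. \<exists>g. \<Phi> g \<and> (\<forall>i<n. g i = f i)) \<Longrightarrow> \<Phi> f"
  unfolding closed_seq_pred_def by blast

lemma closed_seq_pred_const: "closed_seq_pred (\<lambda>f. P)"
  unfolding closed_seq_pred_def by auto

lemma closed_seq_pred_all: "(\<And>k. closed_seq_pred (\<Phi> k)) \<Longrightarrow> closed_seq_pred (\<lambda>f. \<forall>k. \<Phi> k f)"
  unfolding closed_seq_pred_def by metis

lemma closed_seq_pred_coord: "closed_seq_pred (\<lambda>f. P (f i))"
proof (rule closed_seq_predI)
  fix f :: "nat \<Rightarrow> 'a"
  assume "\<And>n. \<exists>g. P (g i) \<and> (\<forall>j<n. g j = f j)"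
  from this[of "Suc i"] show "P (f i)" by auto
qed

lemma closed_seq_pred_imp_coord:
  assumes "closed_seq_pred \<Phi>"
  shows "closed_seq_pred (\<lambda>f. P (f i) \<longrightarrow> \<Phi> f)"
proof (rule closed_seq_predI, rule impI)
  fix f :: "nat \<Rightarrow> 'a"
  assume approx: "\<And>n. \<exists>g. (P (g i) \<longrightarrow> \<Phi> g) \<and> (\<forall>j<n. g j = f j)" and "P (f i)"
  show "\<Phi> f"
  proof (rule closed_seq_predD[OF assms])
    fix n
    obtain g where "P (g i) \<longrightarrow> \<Phi> g" "\<forall>j<max n (Suc i). g j = f j"
      using approx by blast
    with \<open>P (f i)\<close> show "\<exists>g. \<Phi> g \<and> (\<forall>j<n. g j = f j)" by auto
  qed
qed

definition finitely_determined :: "((nat \<Rightarrow> 'a) \<Rightarrow> nat \<Rightarrow> 'b) \<Rightarrow> bool" where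
  "finitely_determined F \<longleftrightarrow>
     (\<forall>n. \<exists>L. \<forall>f g. (\<forall>i<L. f i = g i) \<longrightarrow> (\<forall>i<n. F f i = F g i))"

lemma finitely_determined_reindex:
  assumes "mono h"
  shows "finitely_determined (\<lambda>f i. P (f (h i)))"
  unfolding finitely_determined_def
proof
  fix n
  have "h i < Suc (h n)" if "i < n" for i
    using monoD[OF assms, of i n] that by simp
  then show "\<exists>L. \<forall>f g. (\<forall>i<L. f i = g i) \<longrightarrow> (\<forall>i<n. P (f (h i)) = P (g (h i)))"
    by (intro exI[of _ "Suc (h n)"]) auto
qed

lemma finitely_determined_coord: "finitely_determined (\<lambda>f i. P (f i))"
  using finitely_determined_reindex[of "\<lambda>m. m"] by (simp add: mono_def)

lemma finitely_determined_pair: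
  assumes "finitely_determined F" "finitely_determined G"
  shows "finitely_determined (\<lambda>f i. (F f i, G f i))"
  unfolding finitely_determined_def
proof
  fix n
  obtain L1 where
    L1: "\<forall>f g. (\<forall>i<L1. f i = g i) \<longrightarrow> (\<forall>i<n. F f i = F g i)"
    using assms(1) unfolding finitely_determined_def by blast
  obtain L2 where
    L2: "\<forall>f g. (\<forall>i<L2. f i = g i) \<longrightarrow> (\<forall>i<n. G f i = G g i)"
    using assms(2) unfolding finitely_determined_def by blast
  have "\<forall>i<n. (F f i, G f i) = (F g i, G g i)" if "\<forall>i<max L1 L2. f i = g i" for f g
  proof -
    have "\<forall>i<L1. f i = g i" "\<forall>i<L2. f i = g i" using that by auto
    then have "\<forall>i<n. F f i = F g i" "\<forall>i<n. G f i = G g i" using L1 L2 by blast+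
    then show ?thesis by simp
  qed
  then show "\<exists>L. \<forall>f g. (\<forall>i<L. f i = g i) \<longrightarrow> (\<forall>i<n. (F f i, G f i) = (F g i, G g i))"
    by blast
qed

lemma closed_seq_pred_vimage:
  assumes "closed_seq_pred \<Phi>" and "finitely_determined F"
  shows "closed_seq_pred (\<lambda>f. \<Phi> (F f))"
proof (rule closed_seq_predI)
  fix f
  assume approx: "\<And>n. \<exists>g. \<Phi> (F g) \<and> (\<forall>i<n. g i = f i)"
  show "\<Phi> (F f)"
  proof (rule closed_seq_predD[OF assms(1)])
    fix n
    obtain L where L: "\<forall>f g. (\<forall>i<L. f i = g i) \<longrightarrow> (\<forall>i<n. F f i = F g i)"
      using assms(2) unfolding finitely_determined_def by blast
    obtain g where "\<Phi> (F g)" "\<forall>i<L. g i = f i" using approx by blast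
    with L show "\<exists>g. \<Phi> g \<and> (\<forall>i<n. g i = F f i)" by blast
  qed
qed

lemma mono_prod_encode_right: "mono (\<lambda>m. prod_encode (k, m))"
proof (rule monoI)
  fix m n :: nat
  assume "m \<le> n"
  then have "triangle (k + m) \<le> triangle (k + n)"
    unfolding triangle_def by (intro div_le_mono mult_le_mono) auto
  then show "prod_encode (k, m) \<le> prod_encode (k, n)"
    using \<open>m \<le> n\<close> unfolding prod_encode_def by simp
qed

definition suslin :: "(nat \<Rightarrow> nat) set \<Rightarrow> bool" where
  "suslin B \<longleftrightarrow> (\<exists>\<Phi>. closed_seq_pred \<Phi> \<and> B = {\<beta>. \<exists>\<gamma>. \<Phi> (\<lambda>n. (\<beta> n, \<gamma> n :: nat))})"

lemma suslin_coord: "suslin {\<beta>. P (\<beta> i)}"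
  unfolding suslin_def
  by (rule exI[of _ "\<lambda>z. P (fst (z i))"]) (simp add: closed_seq_pred_coord[of "\<lambda>x. P (fst x)"])

lemma suslin_UN:
  assumes "\<And>k::nat. suslin (B k)"
  shows "suslin (\<Union>k. B k)"
proof -
  from assms obtain \<Phi> where \<Phi>: "\<And>k. closed_seq_pred (\<Phi> k)"
    "\<And>k. B k = {\<beta>. \<exists>\<gamma>. \<Phi> k (\<lambda>n. (\<beta> n, \<gamma> n :: nat))}"
    unfolding suslin_def by metis
  \<comment> \<open>the first witness coordinate selects the index \<open>k\<close>\<close>
  define \<Psi> where "\<Psi> z \<longleftrightarrow> (\<forall>k. snd (z 0) = k \<longrightarrow> \<Phi> k (\<lambda>m. (fst (z m), snd (z (Suc m)))))"
    for z :: "nat \<Rightarrow> nat \<times> nat"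
  have "finitely_determined (\<lambda>z m. (fst (z m), snd (z (Suc m))))"
    by (intro finitely_determined_pair finitely_determined_coord finitely_determined_reindex)
      (simp add: mono_def)
  then have "closed_seq_pred (\<lambda>z. snd (z 0) = k \<longrightarrow> \<Phi> k (\<lambda>m. (fst (z m), snd (z (Suc m)))))"
    for k by (rule closed_seq_pred_imp_coord[OF closed_seq_pred_vimage[OF \<Phi>(1)]])
  then have "closed_seq_pred \<Psi>"
    unfolding \<Psi>_def by (rule closed_seq_pred_all)
  moreover have "(\<Union>k. B k) = {\<beta>. \<exists>\<gamma>. \<Psi> (\<lambda>n. (\<beta> n, \<gamma> n))}"
  proof safe
    fix \<beta> k assume "\<beta> \<in> B k"
    then obtain \<gamma> where "\<Phi> k (\<lambda>n. (\<beta> n, \<gamma> n))" using \<Phi>(2) by auto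
    then show "\<exists>\<gamma>. \<Psi> (\<lambda>n. (\<beta> n, \<gamma> n))"
      by (intro exI[of _ "case_nat k \<gamma>"]) (simp add: \<Psi>_def)
  next
    fix \<beta> \<gamma> assume "\<Psi> (\<lambda>n. (\<beta> n, \<gamma> n))"
    then have "\<Phi> (\<gamma> 0) (\<lambda>m. (\<beta> m, \<gamma> (Suc m)))" by (simp add: \<Psi>_def)
    then have "\<beta> \<in> B (\<gamma> 0)" using \<Phi>(2) by auto
    then show "\<beta> \<in> (\<Union>k. B k)" by auto
  qed
  ultimately show ?thesis unfolding suslin_def by blast
qed

lemma suslin_INT:
  assumes "\<And>k::nat. suslin (B k)"
  shows "suslin (\<Inter>k. B k)"
proof -
  from assms obtain \<Phi> where \<Phi>: "\<And>k. closed_seq_pred (\<Phi> k)"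
    "\<And>k. B k = {\<beta>. \<exists>\<gamma>. \<Phi> k (\<lambda>n. (\<beta> n, \<gamma> n :: nat))}"
    unfolding suslin_def by metis
  \<comment> \<open>the witnesses for all \<open>B k\<close> are interleaved into one sequence\<close>
  define \<Psi> where "\<Psi> z \<longleftrightarrow> (\<forall>k. \<Phi> k (\<lambda>m. (fst (z m), snd (z (prod_encode (k, m))))))"
    for z :: "nat \<Rightarrow> nat \<times> nat"
  have "finitely_determined (\<lambda>z m. (fst (z m), snd (z (prod_encode (k, m)))))" for k
    by (intro finitely_determined_pair finitely_determined_coord finitely_determined_reindex
        mono_prod_encode_right)
  then have "closed_seq_pred (\<lambda>z. \<Phi> k (\<lambda>m. (fst (z m), snd (z (prod_encode (k, m))))))" for k
    by (rule closed_seq_pred_vimage[OF \<Phi>(1)])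
  then have "closed_seq_pred \<Psi>"
    unfolding \<Psi>_def by (rule closed_seq_pred_all)
  moreover have "(\<Inter>k. B k) = {\<beta>. \<exists>\<gamma>. \<Psi> (\<lambda>n. (\<beta> n, \<gamma> n))}"
  proof safe
    fix \<beta> assume "\<beta> \<in> (\<Inter>k. B k)"
    then have "\<forall>k. \<exists>\<gamma>. \<Phi> k (\<lambda>n. (\<beta> n, \<gamma> n))" using \<Phi>(2) by auto
    then obtain \<Gamma> where "\<And>k. \<Phi> k (\<lambda>n. (\<beta> n, \<Gamma> k n))" by metis
    then show "\<exists>\<gamma>. \<Psi> (\<lambda>n. (\<beta> n, \<gamma> n))"
      by (intro exI[of _ "\<lambda>p. case prod_decode p of (k, m) \<Rightarrow> \<Gamma> k m"]) (simp add: \<Psi>_def)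
  next
    fix \<beta> \<gamma> k assume "\<Psi> (\<lambda>n. (\<beta> n, \<gamma> n))"
    then have "\<Phi> k (\<lambda>m. (\<beta> m, \<gamma> (prod_encode (k, m))))" by (simp add: \<Psi>_def)
    then show "\<beta> \<in> B k" using \<Phi>(2) by auto
  qed
  ultimately show ?thesis unfolding suslin_def by blast
qed

lemma suslin_borel:
  assumes "B \<in> sets (borel :: (nat \<Rightarrow> nat) measure)"
  shows "suslin B"
proof -
  have "B \<in> sets (Pi\<^sub>M UNIV (\<lambda>_. borel :: nat measure))"
    using assms sets_PiM_equal_borel by blast
  then have "B \<in> sigma_sets UNIV {{f. f i \<in> A} |i A. A \<in> sets (borel :: nat measure)}"
    unfolding sets_PiM_single by (simp add: PiE_UNIV_domain)
  \<comment> \<open>complements are carried along for the induction step \<open>Compl\<close>\<close>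
  then have "suslin B \<and> suslin (- B)"
  proof (induction rule: sigma_sets.induct)
    case (Basic a)
    then obtain i A where "a = {f. f i \<in> A}" by auto
    moreover have "- {f::nat\<Rightarrow>nat. f i \<in> A} = {f. f i \<notin> A}" by auto
    ultimately show ?case
      using suslin_coord[of "\<lambda>x. x \<in> A" i] suslin_coord[of "\<lambda>x. x \<notin> A" i] by simp
  next
    case Empty
    show ?case using suslin_coord[of "\<lambda>_. False"] suslin_coord[of "\<lambda>_. True"] by simp
  next
    case (Compl a)
    then show ?case by (simp add: Compl_eq_Diff_UNIV[symmetric])
  next
    case (Union a)
    have "- (\<Union> (range a)) = (\<Inter>i. - a i)" by auto
    then show ?case using Union by (simp add: suslin_UN suslin_INT)
  qed
  then show ?thesis ..
qed

section \<open>Koenig's lemma\<close>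

lemma finite_antimono_witness:
  assumes "finite F"
    and ex: "\<And>N::nat. N \<ge> n0 \<Longrightarrow> \<exists>x\<in>F. Q N x"
    and antimono: "\<And>N N' x. n0 \<le> N' \<Longrightarrow> N' \<le> N \<Longrightarrow> Q N x \<Longrightarrow> Q N' x"
  shows "\<exists>x\<in>F. \<forall>N\<ge>n0. Q N x"
proof (rule ccontr)
  assume "\<not> ?thesis"
  then obtain Nf where Nf: "\<And>x. x \<in> F \<Longrightarrow> Nf x \<ge> n0 \<and> \<not> Q (Nf x) x" by metis
  define N where "N = n0 + sum Nf F"
  obtain x where x: "x \<in> F" "Q N x" using ex[of N] by (auto simp: N_def)
  have "Nf x \<le> N" using \<open>finite F\<close> x(1) unfolding N_def by (simp add: member_le_sum trans_le_add2)
  then have "Q (Nf x) x" using antimono Nf[OF x(1)] x(2) by blast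
  with Nf[OF x(1)] show False by blast
qed

locale finite_inverse_system =
  fixes P :: "nat \<Rightarrow> 'x \<Rightarrow> bool" and \<rho> :: "nat \<Rightarrow> 'x \<Rightarrow> 'x"
  assumes finite_level: "\<And>n. finite {x. P n x}"
    and nonempty_level: "\<And>n. \<exists>x. P n x"
    and level_bond: "\<And>m n x. m \<le> n \<Longrightarrow> P n x \<Longrightarrow> P m (\<rho> m x)"
    and bond_bond: "\<And>m n N x. m \<le> n \<Longrightarrow> n \<le> N \<Longrightarrow> P N x \<Longrightarrow> \<rho> m (\<rho> n x) = \<rho> m x"
    and bond_self: "\<And>n x. P n x \<Longrightarrow> \<rho> n x = x"
begin

definition liftable :: "nat \<Rightarrow> 'x \<Rightarrow> bool" where
  "liftable n x \<longleftrightarrow> P n x \<and> (\<forall>N\<ge>n. \<exists>y. P N y \<and> \<rho> n y = x)"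

lemma ex_liftable_0: "\<exists>x. liftable 0 x"
proof -
  have "\<exists>x\<in>{x. P 0 x}. \<forall>N\<ge>0. \<exists>y. P N y \<and> \<rho> 0 y = x"
  proof (rule finite_antimono_witness[OF finite_level])
    fix N :: nat
    obtain y where "P N y" using nonempty_level by blast
    then show "\<exists>x\<in>{x. P 0 x}. \<exists>y. P N y \<and> \<rho> 0 y = x" using level_bond[of 0 N y] by auto
  next
    fix N N' x assume "0 \<le> N'" "N' \<le> N" "\<exists>y. P N y \<and> \<rho> 0 y = x"
    then obtain y where y: "P N y" "\<rho> 0 y = x" by auto
    show "\<exists>y. P N' y \<and> \<rho> 0 y = x"
      by (rule exI[of _ "\<rho> N' y"]) (use y level_bond[of N' N y] bond_bond[of 0 N' N y] \<open>N' \<le> N\<close> in auto)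
  qed
  then show ?thesis unfolding liftable_def by auto
qed

lemma liftable_Suc:
  assumes "liftable n x"
  shows "\<exists>x'. liftable (Suc n) x' \<and> \<rho> n x' = x"
proof -
  have "\<exists>x'\<in>{x. P (Suc n) x}. \<forall>N\<ge>Suc n. \<exists>y. P N y \<and> \<rho> (Suc n) y = x' \<and> \<rho> n y = x"
  proof (rule finite_antimono_witness[OF finite_level])
    fix N :: nat assume N: "N \<ge> Suc n"
    then obtain y where "P N y" "\<rho> n y = x" using assms Suc_leD[OF N] unfolding liftable_def by blast
    then show "\<exists>x'\<in>{x. P (Suc n) x}. \<exists>y. P N y \<and> \<rho> (Suc n) y = x' \<and> \<rho> n y = x"
      using level_bond[of "Suc n" N y] N by auto
  next
    fix N N' x' assume NN: "Suc n \<le> N'" "N' \<le> N" "\<exists>y. P N y \<and> \<rho> (Suc n) y = x' \<and> \<rho> n y = x"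
    then obtain y where y: "P N y" "\<rho> (Suc n) y = x'" "\<rho> n y = x" by auto
    show "\<exists>y. P N' y \<and> \<rho> (Suc n) y = x' \<and> \<rho> n y = x"
      by (rule exI[of _ "\<rho> N' y"])
        (use y level_bond[of N' N y] bond_bond[of "Suc n" N' N y] bond_bond[of n N' N y] NN in auto)
  qed
  then obtain x' where x': "P (Suc n) x'"
    "\<And>N. N \<ge> Suc n \<Longrightarrow> \<exists>y. P N y \<and> \<rho> (Suc n) y = x' \<and> \<rho> n y = x"
    by auto
  obtain y where y: "P (Suc n) y" "\<rho> (Suc n) y = x'" "\<rho> n y = x" using x'(2)[of "Suc n"] by auto
  have "\<rho> n x' = x" using y bond_bond[of n "Suc n" "Suc n" y] by auto
  moreover have "liftable (Suc n) x'" unfolding liftable_def using x' by blast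
  ultimately show ?thesis by blast
qed

theorem ex_thread: "\<exists>X. \<forall>n. P n (X n) \<and> (\<forall>m\<le>n. \<rho> m (X n) = X m)"
proof -
  define X where "X = rec_nat (SOME x. liftable 0 x) (\<lambda>n x. SOME x'. liftable (Suc n) x' \<and> \<rho> n x' = x)"
  have X_Suc: "X (Suc n) = (SOME x'. liftable (Suc n) x' \<and> \<rho> n x' = X n)" for n
    unfolding X_def by simp
  have X_liftable: "liftable n (X n) \<and> (\<forall>m. n = Suc m \<longrightarrow> \<rho> m (X n) = X m)" for n
  proof (induction n)
    case 0
    then show ?case using ex_liftable_0 unfolding X_def by (auto intro: someI_ex)
  next
    case (Suc n)
    then have "\<exists>x'. liftable (Suc n) x' \<and> \<rho> n x' = X n" using liftable_Suc by blast
    then have "liftable (Suc n) (X (Suc n)) \<and> \<rho> n (X (Suc n)) = X n"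
      unfolding X_Suc by (rule someI_ex)
    then show ?case by simp
  qed
  have XP: "P n (X n)" for n using X_liftable[of n] unfolding liftable_def by auto
  have "\<rho> m (X n) = X m" if "m \<le> n" for m n
    using that
  proof (induction n)
    case 0
    then show ?case using bond_self XP by auto
  next
    case (Suc n)
    show ?case
    proof (cases "m = Suc n")
      case True
      then show ?thesis using bond_self XP by auto
    next
      case False
      then have "m \<le> n" using Suc by auto
      have "\<rho> m (X (Suc n)) = \<rho> m (\<rho> n (X (Suc n)))"
        using bond_bond[of m n "Suc n" "X (Suc n)"] XP \<open>m \<le> n\<close> by auto
      also have "\<dots> = \<rho> m (X n)" using X_liftable[of "Suc n"] by auto
      also have "\<dots> = X m" using Suc.IH \<open>m \<le> n\<close> by auto
      finally show ?thesis .
    qed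
  qed
  then show ?thesis using XP by blast
qed

end

section \<open>Finite sequences and the quasiorder on trees\<close>

lemma length_restr [simp]: "length (restr a n) = n"
  by (simp add: restr_def)

lemma nth_restr [simp]: "i < n \<Longrightarrow> restr a n ! i = a i"
  by (simp add: restr_def)

lemma take_restr [simp]: "take m (restr a n) = restr a (min m n)"
  by (simp add: restr_def take_map min_def)

lemma restr_eq_iff: "restr a n = restr b n \<longleftrightarrow> (\<forall>i<n. a i = b i)"
  by (auto simp: restr_def)

lemma restr_0 [simp]: "restr a 0 = []"
  by (simp add: restr_def)

lemma restr_Suc_eq_imp_eq: "(\<And>n. restr a (Suc n) = restr b (Suc n)) \<Longrightarrow> a = b"
  by (metis lessI nth_restr ext)

lemma coherent_lists_limit:
  assumes "\<And>n. length (L n) = Suc n" and "\<And>m n. m \<le> n \<Longrightarrow> take (Suc m) (L n) = L m"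
  shows "\<exists>z. \<forall>n. restr z (Suc n) = L n"
proof (intro exI allI nth_equalityI)
  fix n j assume "j < length (restr (\<lambda>j. L j ! j) (Suc n))"
  then have "j \<le> n" by simp
  then have "L j ! j = take (Suc j) (L n) ! j" using assms(2) by simp
  then show "restr (\<lambda>j. L j ! j) (Suc n) ! j = L n ! j" using \<open>j \<le> n\<close> by simp
qed (simp add: assms(1))

lemma length_seq_add [simp]: "length (seq_add s t) = length s"
  by (simp add: seq_add_def)

lemma nth_seq_add [simp]: "i < length s \<Longrightarrow> seq_add s t ! i = s ! i + t ! i"
  by (simp add: seq_add_def)

lemma seq_add_restr: "seq_add (restr \<alpha> n) (restr \<beta> n) = restr (\<lambda>m. \<alpha> m + \<beta> m) n"
  by (intro nth_equalityI) auto

lemma le_S_refl: "le_S S S"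
proof -
  have "seq_add s (restr (\<lambda>_. 0) (length s)) = s" for s
    by (intro nth_equalityI) auto
  then show ?thesis unfolding le_S_def by (intro exI[of _ "\<lambda>_. 0"]) simp
qed

lemma le_S_trans: "le_S S T \<Longrightarrow> le_S T U \<Longrightarrow> le_S S U"
proof -
  assume "le_S S T" "le_S T U"
  then obtain \<alpha> \<alpha>' where \<alpha>: "\<And>u s. (u, s) \<in> S \<Longrightarrow> (u, seq_add s (restr \<alpha> (length s))) \<in> T"
    and \<alpha>': "\<And>u s. (u, s) \<in> T \<Longrightarrow> (u, seq_add s (restr \<alpha>' (length s))) \<in> U"
    unfolding le_S_def by blast
  have "seq_add (seq_add s (restr \<alpha> (length s))) (restr \<alpha>' (length s))
      = seq_add s (restr (\<lambda>m. \<alpha> m + \<alpha>' m) (length s))" for s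
    by (intro nth_equalityI) auto
  then show "le_S S U"
    unfolding le_S_def using \<alpha>' \<alpha> by (intro exI[of _ "\<lambda>m. \<alpha> m + \<alpha>' m"]) fastforce
qed

lemma le_S_imp_A_of_subset: "le_S S T \<Longrightarrow> A_of S \<subseteq> A_of T"
proof
  fix a assume "le_S S T" "a \<in> A_of S"
  then obtain \<gamma> \<beta> where \<gamma>: "\<And>u s. (u, s) \<in> S \<Longrightarrow> (u, seq_add s (restr \<gamma> (length s))) \<in> T"
    and \<beta>: "\<And>n. (restr a n, restr \<beta> n) \<in> S"
    unfolding le_S_def A_of_def by blast
  have "(restr a n, restr (\<lambda>m. \<beta> m + \<gamma> m) n) \<in> T" for n
    using \<gamma>[OF \<beta>[of n]] by (simp add: seq_add_restr)
  then show "a \<in> A_of T" unfolding A_of_def by blast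
qed

lemma eq_S_imp_A_of_eq: "eq_S S T \<Longrightarrow> A_of S = A_of T"
  unfolding eq_S_def using le_S_imp_A_of_subset by blast

section \<open>Chain trees\<close>

text \<open>A sequence of triples codes a pair \<open>(a, b)\<close> of points of the Cantor space together with a
witness in the Baire space.\<close>
type_synonym triple_seq = "nat \<Rightarrow> bool \<times> bool \<times> nat"

definition proj_rel :: "(triple_seq \<Rightarrow> bool) \<Rightarrow> ((nat \<Rightarrow> bool) \<times> (nat \<Rightarrow> bool)) set" where
  "proj_rel \<Phi> = {(a, b). \<exists>w. \<Phi> (\<lambda>n. (a n, b n, w n))}"

definition branch_prefix :: "(triple_seq \<Rightarrow> bool) \<Rightarrow> bool list \<Rightarrow> bool list \<Rightarrow> nat list \<Rightarrow> bool" where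
  "branch_prefix \<Phi> u v t \<longleftrightarrow> (\<exists>a b w. \<Phi> (\<lambda>n. (a n, b n, w n)) \<and>
     u = restr a (length t) \<and> v = restr b (length t) \<and> t = restr w (length t))"

lemma branch_prefix_length: "branch_prefix \<Phi> u v t \<Longrightarrow> length u = length t \<and> length v = length t"
  unfolding branch_prefix_def by auto

lemma branch_prefix_restr: "\<Phi> (\<lambda>n. (a n, b n, w n)) \<Longrightarrow> branch_prefix \<Phi> (restr a n) (restr b n) (restr w n)"
  unfolding branch_prefix_def by auto

lemma branch_prefix_take:
  assumes "branch_prefix \<Phi> u v t"
  shows "branch_prefix \<Phi> (take m u) (take m v) (take m t)"
proof -
  obtain a b w where "\<Phi> (\<lambda>n. (a n, b n, w n))"
    and "u = restr a (length t)" "v = restr b (length t)" "t = restr w (length t)"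
    using assms unfolding branch_prefix_def by blast
  then show ?thesis
    using branch_prefix_restr[of \<Phi> a b w "min m (length t)"] by (metis take_restr)
qed

lemma mem_proj_rel_of_prefixes:
  assumes "closed_seq_pred \<Phi>"
    and "\<And>n. branch_prefix \<Phi> (restr a (Suc n)) (restr b (Suc n)) (restr w (Suc n))"
  shows "(a, b) \<in> proj_rel \<Phi>"
proof -
  have "\<Phi> (\<lambda>n. (a n, b n, w n))"
  proof (rule closed_seq_predD[OF assms(1)])
    fix n
    obtain a' b' w' where "\<Phi> (\<lambda>n. (a' n, b' n, w' n))" and
      "restr a (Suc n) = restr a' (Suc n)" "restr b (Suc n) = restr b' (Suc n)"
      "restr w (Suc n) = restr w' (Suc n)"
      using assms(2)[of n] unfolding branch_prefix_def by auto
    then show "\<exists>g. \<Phi> g \<and> (\<forall>i<n. g i = (a i, b i, w i))"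
      by (intro exI[of _ "\<lambda>n. (a' n, b' n, w' n)"]) (auto simp: restr_eq_iff)
  qed
  then show ?thesis unfolding proj_rel_def by blast
qed

text \<open>A list \<open>[(v\<^sub>1, t\<^sub>1), \<dots>, (v\<^sub>k, t\<^sub>k)]\<close> is a chain from \<open>u = v\<^sub>0\<close> to \<open>w = v\<^sub>k\<close> if every
\<open>(v\<^sub>i\<^sub>-\<^sub>1, v\<^sub>i, t\<^sub>i)\<close> is a prefix of a branch of \<open>\<Phi>\<close>. It is bounded by \<open>s\<close> if \<open>s\<close> dominates the
sum of the witnesses \<open>t\<^sub>i\<close>, with the length \<open>k\<close> counted in the first entry: this makes the
chains bounded by a given \<open>s\<close> finitely many.\<close>
definition bounded_chain ::
  "(triple_seq \<Rightarrow> bool) \<Rightarrow> bool list \<Rightarrow> bool list \<Rightarrow> nat list \<Rightarrow> (bool list \<times> nat list) list \<Rightarrow> bool"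
where
  "bounded_chain \<Phi> u w s cs \<longleftrightarrow>
    length u = length s \<and> length w = length s \<and> (\<forall>c\<in>set cs. length (snd c) = length s) \<and>
    (\<forall>i<length cs. branch_prefix \<Phi> ((u # map fst cs) ! i) (fst (cs ! i)) (snd (cs ! i))) \<and>
    last (u # map fst cs) = w \<and>
    (\<forall>j<length s. sum_list (map (\<lambda>c. snd c ! j) cs) + (if j = 0 then length cs else 0) \<le> s ! j)"

definition chain_tree :: "(triple_seq \<Rightarrow> bool) \<Rightarrow> (nat \<Rightarrow> bool) \<Rightarrow> tree" where
  "chain_tree \<Phi> a = {(u, s). \<exists>cs. bounded_chain \<Phi> u (restr a (length s)) s cs}"

definition chain_take :: "nat \<Rightarrow> (bool list \<times> nat list) list \<Rightarrow> (bool list \<times> nat list) list" where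
  "chain_take m = map (map_prod (take m) (take m))"

lemma bounded_chain_link:
  "bounded_chain \<Phi> u w s cs \<Longrightarrow> i < length cs \<Longrightarrow>
     branch_prefix \<Phi> ((u # map fst cs) ! i) (fst (cs ! i)) (snd (cs ! i))"
  unfolding bounded_chain_def by simp

lemma bounded_chain_last: "bounded_chain \<Phi> u w s cs \<Longrightarrow> last (u # map fst cs) = w"
  unfolding bounded_chain_def by simp

lemma bounded_chain_sum:
  "bounded_chain \<Phi> u w s cs \<Longrightarrow> j < length s \<Longrightarrow>
     sum_list (map (\<lambda>c. snd c ! j) cs) + (if j = 0 then length cs else 0) \<le> s ! j"
  unfolding bounded_chain_def by simp

lemma bounded_chain_Nil: "length u = length s \<Longrightarrow> bounded_chain \<Phi> u u s []"
  unfolding bounded_chain_def by auto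

lemma bounded_chain_single:
  assumes "\<Phi> (\<lambda>n. (a n, b n, w n))"
  shows "bounded_chain \<Phi> (restr a n) (restr b n) (restr (w(0 := Suc (w 0))) n)
           [(restr b n, restr w n)]"
  using branch_prefix_restr[of \<Phi> a b w n, OF assms] unfolding bounded_chain_def by auto

lemma bounded_chain_mono:
  assumes "bounded_chain \<Phi> u w s cs" "seq_le s t"
  shows "bounded_chain \<Phi> u w t cs"
proof -
  have "sum_list (map (\<lambda>c. snd c ! j) cs) + (if j = 0 then length cs else 0) \<le> t ! j"
    if "j < length t" for j
  proof -
    have "sum_list (map (\<lambda>c. snd c ! j) cs) + (if j = 0 then length cs else 0) \<le> s ! j"
      using assms that unfolding bounded_chain_def seq_le_def by auto
    also have "s ! j \<le> t ! j" using assms(2) that unfolding seq_le_def by auto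
    finally show ?thesis .
  qed
  then show ?thesis using assms unfolding bounded_chain_def seq_le_def by auto
qed

lemma bounded_chain_take:
  assumes chain: "bounded_chain \<Phi> u w s cs"
  shows "bounded_chain \<Phi> (take m u) (take m w) (take m s) (chain_take m cs)"
proof -
  let ?cs = "chain_take m cs"
  have vertices: "take m u # map fst ?cs = map (take m) (u # map fst cs)"
    by (simp add: chain_take_def)
  have "branch_prefix \<Phi> ((take m u # map fst ?cs) ! i) (fst (?cs ! i)) (snd (?cs ! i))"
    if "i < length ?cs" for i
  proof -
    have "branch_prefix \<Phi> ((u # map fst cs) ! i) (fst (cs ! i)) (snd (cs ! i))"
      using chain that unfolding bounded_chain_def chain_take_def by auto
    from branch_prefix_take[OF this, of m] show ?thesis
      unfolding vertices using that by (simp add: chain_take_def nth_Cons' del: list.map)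
  qed
  moreover have "last (take m u # map fst ?cs) = take m w"
  proof -
    have "last (u # map fst cs) = w" using chain unfolding bounded_chain_def by blast
    then show ?thesis unfolding vertices using last_map[of "u # map fst cs" "take m"] by simp
  qed
  moreover have "sum_list (map (\<lambda>c. snd c ! j) ?cs) + (if j = 0 then length ?cs else 0) \<le> take m s ! j"
    if "j < length (take m s)" for j
  proof -
    have "sum_list (map (\<lambda>c. snd c ! j) cs) + (if j = 0 then length cs else 0) \<le> s ! j"
      using chain that unfolding bounded_chain_def by simp
    moreover have "map (\<lambda>c. snd c ! j) ?cs = map (\<lambda>c. snd c ! j) cs"
      "length ?cs = length cs" "take m s ! j = s ! j"
      using that by (simp_all add: chain_take_def)
    ultimately show ?thesis by (simp only:)
  qed
  ultimately show ?thesis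
    using chain unfolding bounded_chain_def by (simp add: chain_take_def)
qed

lemma bounded_chain_append:
  assumes chain1: "bounded_chain \<Phi> u v s cs1" and chain2: "bounded_chain \<Phi> v w t cs2"
    and "length t = length s"
  shows "bounded_chain \<Phi> u w (seq_add s t) (cs1 @ cs2)"
proof -
  define B where "B = butlast (u # map fst cs1)"
  have "last (u # map fst cs1) = v" using chain1 by (rule bounded_chain_last)
  then have B_v: "u # map fst cs1 = B @ [v]"
    unfolding B_def by (metis append_butlast_last_id list.distinct(1))
  have length_B: "length B = length cs1" unfolding B_def by simp
  have vertices: "u # map fst (cs1 @ cs2) = B @ (v # map fst cs2)"
    using B_v by (metis append.assoc append_Cons append_Nil map_append)
  have "branch_prefix \<Phi> ((u # map fst (cs1 @ cs2)) ! i) (fst ((cs1 @ cs2) ! i)) (snd ((cs1 @ cs2) ! i))"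
    if "i < length (cs1 @ cs2)" for i
  proof (cases "i < length cs1")
    case True
    have "(u # map fst (cs1 @ cs2)) ! i = (u # map fst cs1) ! i"
      using True length_B unfolding vertices B_v by (simp add: nth_append)
    moreover have "(cs1 @ cs2) ! i = cs1 ! i" using True by (simp add: nth_append)
    ultimately show ?thesis using bounded_chain_link[OF chain1 True] by (simp only:)
  next
    case False
    define k where "k = i - length cs1"
    have k: "i = length cs1 + k" "k < length cs2" using that False unfolding k_def by auto
    have "(u # map fst (cs1 @ cs2)) ! i = (v # map fst cs2) ! k"
      using length_B unfolding vertices k(1) by (simp add: nth_append)
    moreover have "(cs1 @ cs2) ! i = cs2 ! k" using k(1) by (simp add: nth_append)
    ultimately show ?thesis using bounded_chain_link[OF chain2 k(2)] by (simp only:)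
  qed
  moreover have "last (u # map fst (cs1 @ cs2)) = w"
    using bounded_chain_last[OF chain2] unfolding vertices by simp
  moreover have "sum_list (map (\<lambda>c. snd c ! j) (cs1 @ cs2)) + (if j = 0 then length (cs1 @ cs2) else 0)
      \<le> seq_add s t ! j" if "j < length (seq_add s t)" for j
  proof -
    have "sum_list (map (\<lambda>c. snd c ! j) cs1) + (if j = 0 then length cs1 else 0) \<le> s ! j"
      "sum_list (map (\<lambda>c. snd c ! j) cs2) + (if j = 0 then length cs2 else 0) \<le> t ! j"
      using bounded_chain_sum[OF chain1] bounded_chain_sum[OF chain2] that \<open>length t = length s\<close>
      by auto
    then show ?thesis using that by auto
  qed
  ultimately show ?thesis
    using chain1 chain2 \<open>length t = length s\<close> unfolding bounded_chain_def by auto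
qed

lemma normal_chain_tree: "normal_tree (chain_tree \<Phi> a)"
  unfolding normal_tree_def
proof (intro conjI allI impI)
  show "([], []) \<in> chain_tree \<Phi> a"
    unfolding chain_tree_def using bounded_chain_Nil[of "[]" "[]" \<Phi>] by auto
next
  fix u s assume "(u, s) \<in> chain_tree \<Phi> a"
  then show "length u = length s" unfolding chain_tree_def bounded_chain_def by auto
next
  fix u s n assume "(u, s) \<in> chain_tree \<Phi> a"
  then obtain cs where "bounded_chain \<Phi> u (restr a (length s)) s cs" unfolding chain_tree_def by auto
  from bounded_chain_take[OF this, of n] show "(take n u, take n s) \<in> chain_tree \<Phi> a"
    unfolding chain_tree_def by (auto simp: min.commute)
next
  fix u s t assume "(u, s) \<in> chain_tree \<Phi> a" "seq_le s t"
  then show "(u, t) \<in> chain_tree \<Phi> a"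
    unfolding chain_tree_def by (auto dest: bounded_chain_mono simp: seq_le_def)
qed

lemma le_S_chain_tree:
  assumes "(a, b) \<in> proj_rel \<Phi>"
  shows "le_S (chain_tree \<Phi> a) (chain_tree \<Phi> b)"
proof -
  obtain w where w: "\<Phi> (\<lambda>n. (a n, b n, w n))" using assms unfolding proj_rel_def by auto
  show ?thesis
    unfolding le_S_def
  proof (intro exI allI impI)
    fix u s assume "(u, s) \<in> chain_tree \<Phi> a"
    then obtain cs where "bounded_chain \<Phi> u (restr a (length s)) s cs"
      unfolding chain_tree_def by auto
    from bounded_chain_append[OF this bounded_chain_single[where \<Phi>=\<Phi> and a=a and b=b and w=w, OF w]]
    show "(u, seq_add s (restr (w(0 := Suc (w 0))) (length s))) \<in> chain_tree \<Phi> b"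
      unfolding chain_tree_def by auto
  qed
qed

lemma mem_A_of_chain_tree_self: "b \<in> A_of (chain_tree \<Phi> b)"
proof -
  have "(restr b n, restr (\<lambda>_. 0::nat) n) \<in> chain_tree \<Phi> b" for n
    unfolding chain_tree_def using bounded_chain_Nil[of "restr b n" "restr (\<lambda>_. 0::nat) n" \<Phi>] by auto
  then show ?thesis unfolding A_of_def by blast
qed

lemma bounded_chain_lengths:
  assumes "bounded_chain \<Phi> u w s cs" "c \<in> set cs"
  shows "length (fst c) = length s \<and> length (snd c) = length s"
proof -
  obtain i where i: "i < length cs" "c = cs ! i" using assms(2) by (metis in_set_conv_nth)
  then have "branch_prefix \<Phi> ((u # map fst cs) ! i) (fst c) (snd c)" "length (snd c) = length s"
    using assms unfolding bounded_chain_def by auto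
  then show ?thesis using branch_prefix_length by metis
qed

lemma finite_bounded_chains: "finite {cs. bounded_chain \<Phi> u w (restr \<beta> (Suc n)) cs}"
proof -
  define M where "M = sum \<beta> {..n}"
  define F where "F = {v :: bool list. set v \<subseteq> UNIV \<and> length v = Suc n} \<times>
                      {t. set t \<subseteq> {0..M} \<and> length t = Suc n}"
  have "finite F" unfolding F_def
    by (intro finite_cartesian_product finite_lists_length_eq) auto
  have "{cs. bounded_chain \<Phi> u w (restr \<beta> (Suc n)) cs} \<subseteq> {cs. set cs \<subseteq> F \<and> length cs \<le> \<beta> 0}"
  proof safe
    fix cs assume chain: "bounded_chain \<Phi> u w (restr \<beta> (Suc n)) cs"
    then show "length cs \<le> \<beta> 0" unfolding bounded_chain_def by force
    fix c assume c: "c \<in> set cs"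
    have "snd c ! j \<le> M" if "j < Suc n" for j
    proof -
      have "snd c ! j \<le> sum_list (map (\<lambda>c. snd c ! j) cs)"
        using c by (intro member_le_sum_list) auto
      also have "\<dots> \<le> \<beta> j" using chain that unfolding bounded_chain_def by fastforce
      also have "\<dots> \<le> M" unfolding M_def using that by (intro member_le_sum) auto
      finally show ?thesis .
    qed
    then show "c \<in> F"
      using bounded_chain_lengths[OF chain c] unfolding F_def
      by (cases c) (auto simp: in_set_conv_nth)
  qed
  moreover have "finite {cs. set cs \<subseteq> F \<and> length cs \<le> \<beta> 0}"
    using \<open>finite F\<close> by (rule finite_lists_length_le)
  ultimately show ?thesis by (rule finite_subset)
qed

lemma coherent_bounded_chains:
  assumes "a \<in> A_of (chain_tree \<Phi> b)"
  obtains \<beta> X where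
    "\<And>n. bounded_chain \<Phi> (restr a (Suc n)) (restr b (Suc n)) (restr \<beta> (Suc n)) (X n)"
    "\<And>m n. m \<le> n \<Longrightarrow> chain_take (Suc m) (X n) = X m"
proof -
  obtain \<beta> where \<beta>: "\<And>n. \<exists>cs. bounded_chain \<Phi> (restr a n) (restr b n) (restr \<beta> n) cs"
    using assms unfolding A_of_def chain_tree_def by auto
  define P where
    "P n cs \<longleftrightarrow> bounded_chain \<Phi> (restr a (Suc n)) (restr b (Suc n)) (restr \<beta> (Suc n)) cs" for n cs
  have "\<exists>X. \<forall>n. P n (X n) \<and> (\<forall>m\<le>n. chain_take (Suc m) (X n) = X m)"
  proof (rule finite_inverse_system.ex_thread, unfold_locales)
    show "finite {x. P n x}" for n unfolding P_def by (rule finite_bounded_chains)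
    show "\<exists>x. P n x" for n unfolding P_def using \<beta> by blast
    show "P m (chain_take (Suc m) x)" if "m \<le> n" "P n x" for m n x
      using bounded_chain_take[OF that(2)[unfolded P_def], of "Suc m"] that(1)
      unfolding P_def by (simp add: min_def)
    show "chain_take (Suc m) (chain_take (Suc n) x) = chain_take (Suc m) x"
      if "m \<le> n" for m n :: nat and x
      using that by (simp add: chain_take_def min_def comp_def map_prod_def split_def)
    show "chain_take (Suc n) x = x" if "P n x" for n x
      using bounded_chain_lengths[OF that[unfolded P_def]]
      unfolding chain_take_def by (intro map_idI) auto
  qed
  then obtain X where "\<And>n. P n (X n)" "\<And>m n. m \<le> n \<Longrightarrow> chain_take (Suc m) (X n) = X m"
    by blast
  then show ?thesis by (intro that[of \<beta> X]) (auto simp: P_def)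
qed

lemma rtrancl_proj_rel_of_coherent_chains:
  assumes closed: "closed_seq_pred \<Phi>"
    and chain: "\<And>n. bounded_chain \<Phi> (restr a (Suc n)) (restr b (Suc n)) (restr \<beta> (Suc n)) (X n)"
    and coherent: "\<And>m n. m \<le> n \<Longrightarrow> chain_take (Suc m) (X n) = X m"
  shows "(a, b) \<in> (proj_rel \<Phi>)\<^sup>*"
proof -
  define k where "k = length (X 0)"
  have length_X: "length (X n) = k" for n
    using coherent[of 0 n] unfolding k_def chain_take_def by (metis le0 length_map)
  have lengths: "length (fst (X n ! i)) = Suc n \<and> length (snd (X n ! i)) = Suc n" if "i < k" for n i
    using bounded_chain_lengths[OF chain[of n], of "X n ! i"] that length_X[of n] by simp
  have coherent_i: "X m ! i = map_prod (take (Suc m)) (take (Suc m)) (X n ! i)"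
    if "m \<le> n" "i < k" for i m n
    using coherent[OF that(1)] that(2) length_X[of n] by (metis chain_take_def nth_map)
  have "\<exists>z. \<forall>n. restr z (Suc n) = fst (X n ! i)" "\<exists>z. \<forall>n. restr z (Suc n) = snd (X n ! i)"
    if "i < k" for i
    using coherent_i[OF _ that] lengths[OF that]
    by (auto intro!: coherent_lists_limit simp: map_prod_def split_def)
  then obtain Z T where
    Z: "\<And>i n. i < k \<Longrightarrow> restr (Z i) (Suc n) = fst (X n ! i)" and
    T: "\<And>i n. i < k \<Longrightarrow> restr (T i) (Suc n) = snd (X n ! i)"
    by metis
  \<comment> \<open>the vertices of the limit chain from \<open>a\<close> to \<open>b\<close>\<close>
  define V where "V i = (case i of 0 \<Rightarrow> a | Suc i' \<Rightarrow> Z i')" for i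
  have vertex: "(restr a (Suc n) # map fst (X n)) ! i = restr (V i) (Suc n)" if "i \<le> k" for i n
    using that Z length_X[of n] by (cases i) (auto simp: V_def)
  have "(V i, V (Suc i)) \<in> proj_rel \<Phi>" if "i < k" for i
  proof (rule mem_proj_rel_of_prefixes[OF closed])
    fix n
    have "branch_prefix \<Phi> ((restr a (Suc n) # map fst (X n)) ! i) (fst (X n ! i)) (snd (X n ! i))"
      using bounded_chain_link[OF chain] that length_X by simp
    then show "branch_prefix \<Phi> (restr (V i) (Suc n)) (restr (V (Suc i)) (Suc n)) (restr (T i) (Suc n))"
      using vertex[of i n] Z[OF that, of n] T[OF that, of n] that by (simp add: V_def)
  qed
  then have "(a, V i) \<in> (proj_rel \<Phi>)\<^sup>*" if "i \<le> k" for i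
    using that by (induction i) (auto simp: V_def intro: rtrancl_into_rtrancl)
  moreover have "V k = b"
  proof (rule restr_Suc_eq_imp_eq)
    fix n
    have "restr b (Suc n) = last (restr a (Suc n) # map fst (X n))"
      using bounded_chain_last[OF chain] by simp
    also have "\<dots> = (restr a (Suc n) # map fst (X n)) ! length (map fst (X n))"
      by (metis last_conv_nth diff_Suc_1 length_Cons list.distinct(1))
    also have "\<dots> = (restr a (Suc n) # map fst (X n)) ! k"
      using length_X[of n] by simp
    finally show "restr (V k) (Suc n) = restr b (Suc n)" using vertex[of k n] by simp
  qed
  ultimately show ?thesis by blast
qed

lemma A_of_chain_tree:
  assumes "closed_seq_pred \<Phi>"
  shows "A_of (chain_tree \<Phi> b) = {a. (a, b) \<in> (proj_rel \<Phi>)\<^sup>*}"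
proof
  show "A_of (chain_tree \<Phi> b) \<subseteq> {a. (a, b) \<in> (proj_rel \<Phi>)\<^sup>*}"
  proof
    fix a assume "a \<in> A_of (chain_tree \<Phi> b)"
    then show "a \<in> {a. (a, b) \<in> (proj_rel \<Phi>)\<^sup>*}"
    proof (elim coherent_bounded_chains)
      fix \<beta> X
      assume "\<And>n. bounded_chain \<Phi> (restr a (Suc n)) (restr b (Suc n)) (restr \<beta> (Suc n)) (X n)"
        and "\<And>m n. m \<le> n \<Longrightarrow> chain_take (Suc m) (X n) = X m"
      from rtrancl_proj_rel_of_coherent_chains[OF assms this] show ?thesis by simp
    qed
  qed
  have "A_of (chain_tree \<Phi> a) \<subseteq> A_of (chain_tree \<Phi> b)" if "(a, b) \<in> (proj_rel \<Phi>)\<^sup>*" for a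
    using that
  proof (induction rule: rtrancl_induct)
    case (step c d)
    then show ?case using le_S_imp_A_of_subset[OF le_S_chain_tree[OF step(2)]] by blast
  qed simp
  then show "{a. (a, b) \<in> (proj_rel \<Phi>)\<^sup>*} \<subseteq> A_of (chain_tree \<Phi> b)"
    using mem_A_of_chain_tree_self by blast
qed

section \<open>Reduction of analytic quasiorders to trees\<close>

lemma (in Metric_space) dense_balls_separate:
  assumes "mtopology closure_of C = M" and "x \<in> M" "y \<in> M" "x \<noteq> y"
  obtains c and n :: nat where "c \<in> C" "x \<in> mball c (1 / (real n + 1))" "y \<notin> mball c (1 / (real n + 1))"
proof -
  have "d x y > 0" using assms(2-4) by simp
  then obtain n :: nat where "inverse (real (Suc n)) < d x y / 2"
    using reals_Archimedean half_gt_zero by blast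
  then have n: "1 / (real n + 1) < d x y / 2" by (simp add: inverse_eq_divide add.commute)
  have "\<forall>r>0. \<exists>c\<in>C. c \<in> mball x r"
    using assms(1,2) unfolding metric_closure_of by auto
  moreover have "1 / (real n + 1) > 0" by simp
  ultimately obtain c where c: "c \<in> C" "c \<in> mball x (1 / (real n + 1))" by blast
  then have "x \<in> mball c (1 / (real n + 1))" by (auto simp: commute)
  moreover have "y \<notin> mball c (1 / (real n + 1))"
  proof
    assume "y \<in> mball c (1 / (real n + 1))"
    then have "d c y < 1 / (real n + 1)" "c \<in> M" by auto
    moreover have "d x y \<le> d x c + d c y" using assms(2,3) \<open>c \<in> M\<close> triangle by blast
    ultimately show False using c(2) n by simp
  qed
  ultimately show ?thesis using that c(1) by blast
qed

lemma standard_borel_separating_sequence: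
  assumes "standard_borel M"
  obtains U :: "nat \<Rightarrow> 'a set" where "\<And>k. U k \<in> sets M" "inj_on (\<lambda>x k. x \<in> U k) (space M)"
proof -
  obtain X where X: "completely_metrizable_space X" "separable_space X" "topspace X = space M"
    "sets M = sigma_sets (space M) {U. openin X U}"
    using assms unfolding standard_borel_def by blast
  obtain S d where Sd: "Metric_space S d" "X = Metric_space.mtopology S d"
    using X(1) unfolding completely_metrizable_space_def by blast
  interpret Metric_space S d by (rule Sd(1))
  obtain C where C: "countable C" "mtopology closure_of C = S"
    using X(2,3) Sd(2) unfolding separable_space_def by auto
  define U where "U k = (if C = {} then {} else
      (case prod_decode k of (i, n) \<Rightarrow> mball (from_nat_into C i) (1 / (real n + 1))))" for k
  have "openin X (U k)" for k
    unfolding U_def Sd(2) by (auto split: prod.splits)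
  then have "U k \<in> sets M" for k
    unfolding X(4) by (intro sigma_sets.Basic) auto
  moreover have "inj_on (\<lambda>x k. x \<in> U k) (space M)"
  proof (rule inj_onI, rule ccontr)
    fix x y assume "x \<in> space M" "y \<in> space M" "x \<noteq> y"
      and eq: "(\<lambda>k. x \<in> U k) = (\<lambda>k. y \<in> U k)"
    moreover have "S = space M" using X(3) Sd(2) by simp
    ultimately obtain c n where
      c: "c \<in> C" "x \<in> mball c (1 / (real n + 1))" "y \<notin> mball c (1 / (real n + 1))"
      using dense_balls_separate[OF C(2)] by blast
    obtain i where "from_nat_into C i = c" using from_nat_into_surj[OF C(1) c(1)] by blast
    then have "U (prod_encode (i, n)) = mball c (1 / (real n + 1))"
      unfolding U_def using c(1) by auto
    then show False using eq c(2,3) by metis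
  qed
  ultimately show ?thesis using that by blast
qed

definition witness_slices :: "triple_seq \<Rightarrow> nat \<Rightarrow> nat \<Rightarrow> nat \<times> nat" where
  "witness_slices z q m = (snd (snd (z (prod_encode (0, m)))), snd (snd (z (prod_encode (Suc q, m)))))"

lemma finitely_determined_witness_slices: "finitely_determined (\<lambda>z. witness_slices z q)"
  unfolding witness_slices_def
  by (intro finitely_determined_pair finitely_determined_reindex mono_prod_encode_right)

lemma closed_seq_pred_witness_slices:
  assumes "closed_seq_pred \<Psi>"
  shows "closed_seq_pred (\<lambda>z. P (z k) \<longrightarrow> \<Psi> (witness_slices z q))"
  using closed_seq_pred_imp_coord[OF closed_seq_pred_vimage[OF assms finitely_determined_witness_slices]] .

text \<open>The witness carries in its slice \<open>0\<close> the point \<open>\<beta>\<close> of the Baire space, and in slice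
\<open>q + 1\<close>, for \<open>q\<close> coding \<open>(k, r)\<close>, a witness that \<open>\<beta>\<close> lies in the Suslin set \<open>D (k, r)\<close> on
which bit \<open>k\<close> of \<open>fst (g \<beta>)\<close> (if \<open>r < 2\<close>) or of \<open>snd (g \<beta>)\<close> (otherwise) equals \<open>even r\<close>.\<close>
lemma proj_rel_borel_image:
  fixes g :: "(nat \<Rightarrow> nat) \<Rightarrow> (nat \<Rightarrow> bool) \<times> (nat \<Rightarrow> bool)"
  assumes "\<And>k. {\<beta>. fst (g \<beta>) k} \<in> sets borel" "\<And>k. {\<beta>. snd (g \<beta>) k} \<in> sets borel"
  obtains \<Phi> where "closed_seq_pred \<Phi>" "proj_rel \<Phi> = range g"
proof -
  define bit where "bit r x y \<longleftrightarrow> (if r < (2::nat) then x else y) = even r" for r and x y :: bool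
  have bit_eq: "x = x' \<and> y = y'" if "\<And>r. bit r x y \<Longrightarrow> bit r x' y'" for x y x' y'
    using that[of 0] that[of 1] that[of 2] that[of 3] by (auto simp: bit_def)
  define D where "D k r = {\<beta>. bit r (fst (g \<beta>) k) (snd (g \<beta>) k)}" for k r
  have "D k r \<in> sets borel" for k r
  proof -
    have "D k r = (if r < 2 then {\<beta>. fst (g \<beta>) k} else {\<beta>. snd (g \<beta>) k})
        \<or> D k r = - (if r < 2 then {\<beta>. fst (g \<beta>) k} else {\<beta>. snd (g \<beta>) k})"
      unfolding D_def bit_def by auto
    then show ?thesis using assms by (auto split: if_splits)
  qed
  then have "\<forall>k r. \<exists>\<Psi>. closed_seq_pred \<Psi> \<and> D k r = {\<beta>. \<exists>\<gamma>. \<Psi> (\<lambda>n. (\<beta> n, \<gamma> n :: nat))}"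
    using suslin_borel unfolding suslin_def by blast
  then obtain \<Psi> where \<Psi>: "\<And>k r. closed_seq_pred (\<Psi> k r)"
    "\<And>k r. D k r = {\<beta>. \<exists>\<gamma>. \<Psi> k r (\<lambda>n. (\<beta> n, \<gamma> n :: nat))}"
    by metis
  define \<Phi> where "\<Phi> z \<longleftrightarrow> (\<forall>k r. bit r (fst (z k)) (fst (snd (z k))) \<longrightarrow>
      \<Psi> k r (witness_slices z (prod_encode (k, r))))" for z :: triple_seq
  have "closed_seq_pred \<Phi>"
    unfolding \<Phi>_def by (intro closed_seq_pred_all closed_seq_pred_witness_slices \<Psi>(1))
  moreover have "proj_rel \<Phi> = range g"
  proof
    show "proj_rel \<Phi> \<subseteq> range g"
    proof
      fix p assume "p \<in> proj_rel \<Phi>"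
      then obtain a b w where p: "p = (a, b)" and w: "\<Phi> (\<lambda>n. (a n, b n, w n))"
        unfolding proj_rel_def by auto
      define \<beta> where "\<beta> m = w (prod_encode (0, m))" for m
      have "\<beta> \<in> D k r" if "bit r (a k) (b k)" for k r
      proof -
        have "\<Psi> k r (\<lambda>m. (\<beta> m, w (prod_encode (Suc (prod_encode (k, r)), m))))"
          using w that unfolding \<Phi>_def witness_slices_def \<beta>_def by auto
        then show ?thesis
          unfolding \<Psi>(2) by (intro CollectI exI[of _ "\<lambda>m. w (prod_encode (Suc (prod_encode (k, r)), m))"])
      qed
      then have "a k = fst (g \<beta>) k \<and> b k = snd (g \<beta>) k" for k
        by (intro bit_eq) (auto simp: D_def)
      then have "p = g \<beta>" unfolding p by (simp add: prod_eq_iff fun_eq_iff)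
      then show "p \<in> range g" by (metis rangeI)
    qed
    show "range g \<subseteq> proj_rel \<Phi>"
    proof
      fix p assume "p \<in> range g"
      then obtain \<beta> where p: "p = g \<beta>" by auto
      have "\<forall>k r. \<exists>\<gamma>. \<beta> \<in> D k r \<longrightarrow> \<Psi> k r (\<lambda>n. (\<beta> n, \<gamma> n))" using \<Psi>(2) by blast
      then obtain \<Gamma> where \<Gamma>: "\<And>k r. \<beta> \<in> D k r \<Longrightarrow> \<Psi> k r (\<lambda>n. (\<beta> n, \<Gamma> k r n))" by metis
      define w where "w q = (case prod_decode q of
          (0, m) \<Rightarrow> \<beta> m | (Suc q', m) \<Rightarrow> case prod_decode q' of (k, r) \<Rightarrow> \<Gamma> k r m)" for q
      have "\<Phi> (\<lambda>n. (fst (g \<beta>) n, snd (g \<beta>) n, w n))"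
        unfolding \<Phi>_def witness_slices_def w_def by (auto intro: \<Gamma> simp: D_def)
      then show "p \<in> proj_rel \<Phi>" unfolding proj_rel_def p by (cases "g \<beta>") auto
    qed
  qed
  ultimately show ?thesis using that by blast
qed

lemma analytic_image_proj_rel:
  fixes G :: "(nat \<Rightarrow> nat) \<Rightarrow> 'a \<times> 'a"
  assumes G: "G \<in> borel \<rightarrow>\<^sub>M M \<Otimes>\<^sub>M M" and U: "\<And>k. U k \<in> sets M"
  obtains \<Phi> where "closed_seq_pred \<Phi>"
    "proj_rel \<Phi> = {((\<lambda>k. x \<in> U k), (\<lambda>k. y \<in> U k)) | x y. (x, y) \<in> range G}"
proof -
  define g where "g \<beta> = ((\<lambda>k. fst (G \<beta>) \<in> U k), (\<lambda>k. snd (G \<beta>) \<in> U k))" for \<beta>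
  have "{\<beta>. fst (g \<beta>) k} \<in> sets borel" "{\<beta>. snd (g \<beta>) k} \<in> sets borel" for k
    using measurable_sets[OF measurable_compose[OF G measurable_fst] U]
      measurable_sets[OF measurable_compose[OF G measurable_snd] U]
    unfolding g_def by (auto simp: vimage_def)
  then obtain \<Phi> where "closed_seq_pred \<Phi>" "proj_rel \<Phi> = range g"
    by (rule proj_rel_borel_image)
  moreover have "range g = {((\<lambda>k. x \<in> U k), (\<lambda>k. y \<in> U k)) | x y. (x, y) \<in> range G}"
    unfolding g_def by (auto simp: image_iff) (metis prod.collapse fst_conv snd_conv)+
  ultimately show ?thesis using that by simp
qed

lemma measurable_chain_tree:
  assumes [measurable]: "\<And>k. U k \<in> sets M"
  shows "(\<lambda>x. chain_tree \<Phi> (\<lambda>k. x \<in> U k)) \<in> M \<rightarrow>\<^sub>M Tspace"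
  unfolding Tspace_def
proof (rule measurable_measure_of)
  show "{{T \<in> NTrees. p \<in> T} |p. True} \<subseteq> Pow NTrees" by auto
  show "(\<lambda>x. chain_tree \<Phi> (\<lambda>k. x \<in> U k)) \<in> space M \<rightarrow> NTrees"
    using normal_chain_tree unfolding NTrees_def by auto
  fix Y assume "Y \<in> {{T \<in> NTrees. p \<in> T} |p. True}"
  then obtain u s where Y: "Y = {T \<in> NTrees. (u, s) \<in> T}" by auto
  \<comment> \<open>membership of \<open>(u, s)\<close> depends only on the first \<open>length s\<close> bits of the code of \<open>x\<close>\<close>
  define V where "V = {v. set v \<subseteq> UNIV \<and> length v = length s \<and> (\<exists>cs. bounded_chain \<Phi> u v s cs)}"
  have "finite V"
    by (rule finite_subset[OF _ finite_lists_length_eq[of "UNIV :: bool set" "length s"]])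
      (auto simp: V_def)
  have "(\<lambda>x. chain_tree \<Phi> (\<lambda>k. x \<in> U k)) -` Y \<inter> space M =
      {x \<in> space M. \<exists>v\<in>V. \<forall>j<length s. (x \<in> U j) = v ! j}"
  proof -
    have "(u, s) \<in> chain_tree \<Phi> (\<lambda>k. x \<in> U k) \<longleftrightarrow> (\<exists>v\<in>V. \<forall>j<length s. (x \<in> U j) = v ! j)" for x
    proof -
      have "(\<forall>j<length s. (x \<in> U j) = v ! j) \<longleftrightarrow> restr (\<lambda>k. x \<in> U k) (length s) = v"
        if "length v = length s" for v
        using that by (auto simp: list_eq_iff_nth_eq)
      then show ?thesis unfolding chain_tree_def V_def by auto
    qed
    then show ?thesis unfolding Y using normal_chain_tree unfolding NTrees_def by auto
  qed
  also have "\<dots> \<in> sets M" using \<open>finite V\<close> by measurable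
  finally show "(\<lambda>x. chain_tree \<Phi> (\<lambda>k. x \<in> U k)) -` Y \<inter> space M \<in> sets M" .
qed

lemma analytic_rel_proj_rel:
  assumes "analytic_rel M R" and "\<And>k. U k \<in> sets M"
  obtains \<Phi> where "closed_seq_pred \<Phi>"
    "proj_rel \<Phi> = {((\<lambda>k. x \<in> U k), (\<lambda>k. y \<in> U k)) | x y. x \<in> space M \<and> y \<in> space M \<and> R x y}"
proof (cases "rel_graph M R = {}")
  case True
  then have "proj_rel (\<lambda>_. False) =
      {((\<lambda>k. x \<in> U k), (\<lambda>k. y \<in> U k)) | x y. x \<in> space M \<and> y \<in> space M \<and> R x y}"
    unfolding proj_rel_def rel_graph_def by auto
  with closed_seq_pred_const show ?thesis by (rule that)
next
  case False
  then obtain G :: "(nat \<Rightarrow> nat) \<Rightarrow> 'a \<times> 'a" where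
    G: "G \<in> borel \<rightarrow>\<^sub>M M \<Otimes>\<^sub>M M" "range G = rel_graph M R"
    using assms(1) unfolding analytic_rel_def analytic_set_def by blast
  obtain \<Phi> where "closed_seq_pred \<Phi>"
    and "proj_rel \<Phi> = {((\<lambda>k. x \<in> U k), (\<lambda>k. y \<in> U k)) | x y. (x, y) \<in> range G}"
    using G(1) assms(2) by (rule analytic_image_proj_rel)
  moreover have "{((\<lambda>k. x \<in> U k), (\<lambda>k. y \<in> U k)) | x y. (x, y) \<in> range G} =
      {((\<lambda>k. x \<in> U k), (\<lambda>k. y \<in> U k)) | x y. x \<in> space M \<and> y \<in> space M \<and> R x y}"
    unfolding G(2) rel_graph_def by blast
  ultimately show ?thesis using that by simp
qed

lemma rtrancl_image_quasiorder:
  assumes "quasiorder_on X R" "inj_on e X" "y \<in> X"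
  shows "(a, e y) \<in> {(e x, e x') | x x'. x \<in> X \<and> x' \<in> X \<and> R x x'}\<^sup>* \<longleftrightarrow> (\<exists>x\<in>X. R x y \<and> a = e x)"
    (is "_ \<in> ?S\<^sup>* \<longleftrightarrow> _")
proof
  assume "(a, e y) \<in> ?S\<^sup>*"
  then show "\<exists>x\<in>X. R x y \<and> a = e x"
  proof (induction rule: converse_rtrancl_induct)
    case base
    then show ?case using assms unfolding quasiorder_on_def by blast
  next
    case (step a c)
    then obtain x x' z where "a = e x" "c = e x'" "c = e z" "R x x'" "R z y" "x \<in> X" "x' \<in> X" "z \<in> X"
      by blast
    then show ?case using assms unfolding quasiorder_on_def inj_on_def by metis
  qed
next
  assume "\<exists>x\<in>X. R x y \<and> a = e x"
  then show "(a, e y) \<in> ?S\<^sup>*" using assms(3) by blast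
qed

lemma quasiorder_reduction_to_trees:
  assumes "C_qo M R"
  obtains f :: "'a \<Rightarrow> tree" and e :: "'a \<Rightarrow> nat \<Rightarrow> bool" where
    "f \<in> M \<rightarrow>\<^sub>M Tspace" "inj_on e (space M)"
    "\<And>x y. x \<in> space M \<Longrightarrow> y \<in> space M \<Longrightarrow> R x y \<Longrightarrow> le_S (f x) (f y)"
    "\<And>x. x \<in> space M \<Longrightarrow> A_of (f x) = e ` {z \<in> space M. R z x}"
proof -
  have "standard_borel M" and qo: "quasiorder_on (space M) R" and "analytic_rel M R"
    using assms unfolding C_qo_def by auto
  obtain U :: "nat \<Rightarrow> 'a set" where U: "\<And>k. U k \<in> sets M" and inj: "inj_on (\<lambda>x k. x \<in> U k) (space M)"
    using \<open>standard_borel M\<close> by (rule standard_borel_separating_sequence) blast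
  obtain \<Phi> where "closed_seq_pred \<Phi>" and \<Phi>_codes:
    "proj_rel \<Phi> = {((\<lambda>k. x \<in> U k), (\<lambda>k. y \<in> U k)) | x y. x \<in> space M \<and> y \<in> space M \<and> R x y}"
    using \<open>analytic_rel M R\<close> U by (rule analytic_rel_proj_rel[where U = U])
  define e where "e x = (\<lambda>k. x \<in> U k)" for x
  have \<Phi>: "proj_rel \<Phi> = {(e x, e y) | x y. x \<in> space M \<and> y \<in> space M \<and> R x y}"
    unfolding \<Phi>_codes e_def ..
  show ?thesis
  proof (rule that[of "\<lambda>x. chain_tree \<Phi> (e x)" e])
    show "(\<lambda>x. chain_tree \<Phi> (e x)) \<in> M \<rightarrow>\<^sub>M Tspace"
      unfolding e_def using U by (rule measurable_chain_tree)
    show "inj_on e (space M)" using inj unfolding e_def .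
    show "le_S (chain_tree \<Phi> (e x)) (chain_tree \<Phi> (e y))"
      if "x \<in> space M" "y \<in> space M" "R x y" for x y
      using that by (intro le_S_chain_tree) (auto simp: \<Phi>)
    show "A_of (chain_tree \<Phi> (e x)) = e ` {z \<in> space M. R z x}" if "x \<in> space M" for x
      using rtrancl_image_quasiorder[OF qo \<open>inj_on e (space M)\<close> that]
      unfolding A_of_chain_tree[OF \<open>closed_seq_pred \<Phi>\<close>] \<Phi> by auto
  qed
qed

section \<open>The standard Borel space of normal trees\<close>

lemma second_countable_euclidean: "second_countable (euclidean :: 'a::second_countable_topology topology)"
proof -
  obtain B :: "'a set set" where B: "countable B" "\<And>C. C \<in> B \<Longrightarrow> open C"
    "\<And>S. open S \<Longrightarrow> \<exists>U. U \<subseteq> B \<and> S = \<Union>U"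
    using univ_second_countable by blast
  show ?thesis
    unfolding second_countable_def
  proof (intro exI[of _ B] conjI ballI allI impI)
    fix U :: "'a set" and x assume "openin euclidean U \<and> x \<in> U"
    then show "\<exists>V\<in>B. x \<in> V \<and> V \<subseteq> U" using B(3) by fastforce
  qed (use B in auto)
qed

lemma homeomorphic_map_pullback_topology:
  assumes "inj_on f A" "f ` A \<subseteq> topspace Y"
  shows "homeomorphic_map (pullback_topology A f Y) (subtopology Y (f ` A)) f"
  unfolding homeomorphic_map_def quotient_map_def
proof (intro conjI allI impI)
  have top: "topspace (pullback_topology A f Y) = A"
    using assms(2) unfolding topspace_pullback_topology by auto
  then show "f ` topspace (pullback_topology A f Y) = topspace (subtopology Y (f ` A))"
    using assms(2) by auto
  show "inj_on f (topspace (pullback_topology A f Y))" using assms(1) top by simp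
  fix U assume "U \<subseteq> topspace (subtopology Y (f ` A))"
  then have U: "U \<subseteq> f ` A" by simp
  have "{x \<in> A. f x \<in> U} = f -` V \<inter> A \<longleftrightarrow> U = V \<inter> f ` A" for V
    using U by blast
  then show "openin (pullback_topology A f Y) {x \<in> topspace (pullback_topology A f Y). f x \<in> U}
      \<longleftrightarrow> openin (subtopology Y (f ` A)) U"
    unfolding top openin_pullback_topology openin_subtopology by simp
qed

definition tree_indicator :: "tree \<Rightarrow> (bool list \<times> nat list) \<Rightarrow> real" where
  "tree_indicator T p = (if p \<in> T then 1 else 0)"

lemma inj_tree_indicator: "inj tree_indicator"
  by (rule injI) (auto simp: tree_indicator_def fun_eq_iff split: if_splits)

lemma closed_tree_indicator_image: "closed (tree_indicator ` NTrees)"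
proof -
  have "tree_indicator ` NTrees = {h. (\<forall>p. h p = 0 \<or> h p = 1) \<and> h ([], []) = 1 \<and>
      (\<forall>u s. length u = length s \<or> h (u, s) = 0) \<and>
      (\<forall>u s n. h (u, s) = 0 \<or> h (take n u, take n s) = 1) \<and>
      (\<forall>u s t. \<not> seq_le s t \<or> h (u, s) = 0 \<or> h (u, t) = 1)}" (is "_ = ?K")
  proof
    show "tree_indicator ` NTrees \<subseteq> ?K"
      unfolding NTrees_def normal_tree_def tree_indicator_def by (auto split: if_splits)
    show "?K \<subseteq> tree_indicator ` NTrees"
    proof
      fix h assume h: "h \<in> ?K"
      define T where "T = {p. h p = 1}"
      have h01: "h p = 0 \<or> h p = 1" for p using h by (cases p) simp
      have T: "h p = 1 \<longleftrightarrow> p \<in> T" "h p = 0 \<longleftrightarrow> p \<notin> T" for p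
        unfolding T_def using h01[of p] by auto
      then have "h = tree_indicator T"
        unfolding tree_indicator_def by (metis (full_types))
      moreover have "T \<in> NTrees"
        using h unfolding NTrees_def normal_tree_def mem_Collect_eq T by blast
      ultimately show "h \<in> tree_indicator ` NTrees" by blast
    qed
  qed
  also have "closed ?K"
    by (intro closed_Collect_conj closed_Collect_all closed_Collect_disj closed_Collect_eq
        continuous_on_product_coordinates continuous_on_const closed_Collect_const)
  finally show ?thesis .
qed

lemma space_Tspace: "space Tspace = NTrees"
  unfolding Tspace_def by (rule space_measure_of_conv)

lemma sets_Tspace: "sets Tspace = sigma_sets NTrees {{T \<in> NTrees. p \<in> T} | p. True}"
  unfolding Tspace_def by (rule sets_measure_of) auto

lemma Tspace_mem_measurable: "{T \<in> space Tspace. p \<in> T} \<in> sets Tspace"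
  unfolding sets_Tspace space_Tspace by (rule sigma_sets.Basic) blast

lemma openin_tree_topology:
  "openin (pullback_topology NTrees tree_indicator euclidean) S \<longleftrightarrow>
     (\<exists>V. open V \<and> S = tree_indicator -` V \<inter> NTrees)"
  unfolding openin_pullback_topology by simp

lemma sets_Tspace_tree_topology:
  "sets Tspace = sigma_sets NTrees {S. openin (pullback_topology NTrees tree_indicator euclidean) S}"
proof
  have "tree_indicator \<in> borel_measurable Tspace"
  proof (rule measurable_coordinatewise_then_product)
    show "(\<lambda>T. tree_indicator T p) \<in> borel_measurable Tspace" for p
      unfolding tree_indicator_def by (intro measurable_If measurable_const Tspace_mem_measurable) auto
  qed
  then have "tree_indicator -` V \<inter> NTrees \<in> sets Tspace" if "open V" for V
    using measurable_sets[OF _ borel_open[OF that]] by (metis space_Tspace)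
  then show "sigma_sets NTrees {S. openin (pullback_topology NTrees tree_indicator euclidean) S}
      \<subseteq> sets Tspace"
    unfolding openin_tree_topology
    using sets.top[of Tspace] by (intro sets.sigma_sets_subset') (auto simp: space_Tspace)
  show "sets Tspace \<subseteq> sigma_sets NTrees {S. openin (pullback_topology NTrees tree_indicator euclidean) S}"
    unfolding sets_Tspace
  proof (rule sigma_sets_mono', safe)
    fix p
    have "{T \<in> NTrees. p \<in> T} = tree_indicator -` {h. 1/2 < h p} \<inter> NTrees"
      unfolding tree_indicator_def by auto
    moreover have "open {h :: (bool list \<times> nat list) \<Rightarrow> real. 1/2 < h p}"
      by (intro open_Collect_less continuous_on_const continuous_on_product_coordinates)
    ultimately show "openin (pullback_topology NTrees tree_indicator euclidean) {T \<in> NTrees. p \<in> T}"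
      unfolding openin_tree_topology by blast
  qed
qed

text \<open>The Borel structure of \<open>Tspace\<close> comes from the topology making \<open>tree_indicator\<close> a
homeomorphism onto a closed subset of \<open>\<real>\<^sup>\<omega>\<close>.\<close>
lemma standard_borel_Tspace: "standard_borel Tspace"
proof -
  define X where "X = pullback_topology NTrees tree_indicator euclidean"
  define Y where "Y = subtopology (euclidean :: (bool list \<times> nat list \<Rightarrow> real) topology)
                        (tree_indicator ` NTrees)"
  have "homeomorphic_map X Y tree_indicator"
    unfolding X_def Y_def
    by (rule homeomorphic_map_pullback_topology) (auto intro: inj_on_subset[OF inj_tree_indicator])
  then have hom: "X homeomorphic_space Y" by (rule homeomorphic_map_imp_homeomorphic_space)
  have "completely_metrizable_space Y"
    unfolding Y_def using closed_tree_indicator_image[unfolded closed_closedin]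
    by (rule completely_metrizable_space_closedin[OF completely_metrizable_space_euclidean])
  then have "completely_metrizable_space X"
    using homeomorphic_completely_metrizable_space[OF hom] by simp
  have "second_countable Y"
    unfolding Y_def by (rule second_countable_subtopology[OF second_countable_euclidean])
  then have "separable_space X"
    using homeomorphic_space_second_countability[OF hom] second_countable_imp_separable_space
    by simp
  moreover have "topspace X = space Tspace"
    unfolding X_def space_Tspace topspace_pullback_topology by simp
  ultimately show ?thesis
    unfolding standard_borel_def using \<open>completely_metrizable_space X\<close> sets_Tspace_tree_topology
    by (metis X_def space_Tspace)
qed

section \<open>Analyticity of the relations on trees\<close>

definition tree_of_slice :: "nat \<Rightarrow> (nat \<Rightarrow> nat) \<Rightarrow> tree" where
  "tree_of_slice i \<beta> = {p. \<beta> (prod_encode (i, to_nat p)) \<noteq> 0}"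

definition slice :: "nat \<Rightarrow> (nat \<Rightarrow> nat) \<Rightarrow> nat \<Rightarrow> nat" where
  "slice i \<beta> m = \<beta> (prod_encode (i, m))"

definition le_S_witness :: "tree \<Rightarrow> tree \<Rightarrow> (nat \<Rightarrow> nat) \<Rightarrow> bool" where
  "le_S_witness S T \<alpha> \<longleftrightarrow> (\<forall>u s. (u, s) \<in> S \<longrightarrow> (u, seq_add s (restr \<alpha> (length s))) \<in> T)"

lemma le_S_iff_witness: "le_S S T \<longleftrightarrow> (\<exists>\<alpha>. le_S_witness S T \<alpha>)"
  unfolding le_S_def le_S_witness_def ..

lemma pred_le_S_witness:
  "Measurable.pred borel (\<lambda>\<beta>. le_S_witness (tree_of_slice i \<beta>) (tree_of_slice j \<beta>) (slice k \<beta>))"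
proof -
  \<comment> \<open>only the countably many finite restrictions of \<open>\<alpha>\<close> matter\<close>
  have finite_witness: "le_S_witness S T \<alpha> \<longleftrightarrow> (\<forall>u s l. (u, s) \<in> S \<longrightarrow> length l = length s \<longrightarrow>
      (\<forall>j<length s. \<alpha> j = l ! j) \<longrightarrow> (u, seq_add s l) \<in> T)" for S T \<alpha>
  proof -
    have "(\<forall>j<length s. \<alpha> j = l ! j) \<and> length l = length s \<longleftrightarrow> l = restr \<alpha> (length s)"
      for s :: "nat list" and l
      by (auto simp: list_eq_iff_nth_eq)
    then show ?thesis unfolding le_S_witness_def by metis
  qed
  show ?thesis
    unfolding finite_witness tree_of_slice_def slice_def mem_Collect_eq by measurable
qed

lemma pred_normal_tree_of_slice: "Measurable.pred borel (\<lambda>\<beta>. normal_tree (tree_of_slice i \<beta>))"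
  unfolding normal_tree_def tree_of_slice_def mem_Collect_eq by measurable

definition trivial_tree :: tree where
  "trivial_tree = {([], [])}"

lemma trivial_tree_mem_NTrees: "trivial_tree \<in> NTrees"
  unfolding trivial_tree_def NTrees_def normal_tree_def seq_le_def by auto

lemma measurable_tree_of_slice:
  assumes [measurable]: "Measurable.pred borel C"
    and normal: "\<And>\<beta>. C \<beta> \<Longrightarrow> normal_tree (tree_of_slice i \<beta>)"
  shows "(\<lambda>\<beta>. if C \<beta> then tree_of_slice i \<beta> else trivial_tree) \<in> borel \<rightarrow>\<^sub>M Tspace"
  unfolding Tspace_def
proof (rule measurable_measure_of)
  show "{{T \<in> NTrees. p \<in> T} |p. True} \<subseteq> Pow NTrees" by auto
  show "(\<lambda>\<beta>. if C \<beta> then tree_of_slice i \<beta> else trivial_tree) \<in> space borel \<rightarrow> NTrees"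
    using normal trivial_tree_mem_NTrees unfolding NTrees_def by auto
  fix Y assume "Y \<in> {{T \<in> NTrees. p \<in> T} |p. True}"
  then obtain p where Y: "Y = {T \<in> NTrees. p \<in> T}" by auto
  have "(\<lambda>\<beta>. if C \<beta> then tree_of_slice i \<beta> else trivial_tree) -` Y \<inter> space borel =
      {\<beta> \<in> space borel. if C \<beta> then \<beta> (prod_encode (i, to_nat p)) \<noteq> 0 else p \<in> trivial_tree}"
    unfolding Y using normal trivial_tree_mem_NTrees unfolding NTrees_def tree_of_slice_def by auto
  also have "\<dots> \<in> sets borel" by measurable
  finally show "(\<lambda>\<beta>. if C \<beta> then tree_of_slice i \<beta> else trivial_tree) -` Y \<inter> space borel \<in> sets borel" .
qed

lemma ex_code_of_trees: "\<exists>\<beta>. tree_of_slice 0 \<beta> = S \<and> tree_of_slice 1 \<beta> = T \<and> slice 2 \<beta> = \<alpha> \<and> slice 3 \<beta> = \<alpha>'"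
proof -
  define \<beta> where "\<beta> q = (case prod_decode q of (i, c) \<Rightarrow>
      if i = 0 then (if from_nat c \<in> S then 1 else 0)
      else if i = 1 then (if from_nat c \<in> T then 1 else 0)
      else if i = 2 then \<alpha> c else \<alpha>' c)" for q
  have "tree_of_slice 0 \<beta> = S" "tree_of_slice 1 \<beta> = T" "slice 2 \<beta> = \<alpha>" "slice 3 \<beta> = \<alpha>'"
    unfolding tree_of_slice_def slice_def \<beta>_def by auto
  then show ?thesis by blast
qed

text \<open>\<open>trivial_tree\<close> is the value taken on codes that fail the condition.\<close>
lemma analytic_rel_TspaceI:
  fixes Q :: "tree \<Rightarrow> tree \<Rightarrow> (nat \<Rightarrow> nat) \<Rightarrow> (nat \<Rightarrow> nat) \<Rightarrow> bool"
  assumes Q [measurable]: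
    "Measurable.pred borel (\<lambda>\<beta>. Q (tree_of_slice 0 \<beta>) (tree_of_slice 1 \<beta>) (slice 2 \<beta>) (slice 3 \<beta>))"
    and Rel_iff: "\<And>S T. S \<in> NTrees \<Longrightarrow> T \<in> NTrees \<Longrightarrow> Rel S T \<longleftrightarrow> (\<exists>\<alpha> \<alpha>'. Q S T \<alpha> \<alpha>')"
    and "Rel trivial_tree trivial_tree"
  shows "analytic_rel Tspace Rel"
proof -
  have [measurable]: "Measurable.pred borel (\<lambda>\<beta>. normal_tree (tree_of_slice i \<beta>))" for i
    by (rule pred_normal_tree_of_slice)
  define C where "C \<beta> \<longleftrightarrow> normal_tree (tree_of_slice 0 \<beta>) \<and> normal_tree (tree_of_slice 1 \<beta>) \<and>
     Q (tree_of_slice 0 \<beta>) (tree_of_slice 1 \<beta>) (slice 2 \<beta>) (slice 3 \<beta>)" for \<beta>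
  have C [measurable]: "Measurable.pred borel C" unfolding C_def by measurable
  define G where "G \<beta> = (if C \<beta> then (tree_of_slice 0 \<beta>, tree_of_slice 1 \<beta>) else (trivial_tree, trivial_tree))"
    for \<beta>
  have "G \<in> borel \<rightarrow>\<^sub>M Tspace \<Otimes>\<^sub>M Tspace"
  proof (rule measurable_pair)
    show "fst \<circ> G \<in> borel \<rightarrow>\<^sub>M Tspace" "snd \<circ> G \<in> borel \<rightarrow>\<^sub>M Tspace"
      unfolding G_def comp_def if_distrib fst_conv snd_conv
      by (intro measurable_tree_of_slice C; simp add: C_def)+
  qed
  moreover have "range G = rel_graph Tspace Rel"
  proof
    show "range G \<subseteq> rel_graph Tspace Rel"
      using Rel_iff \<open>Rel trivial_tree trivial_tree\<close> trivial_tree_mem_NTrees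
      unfolding G_def C_def rel_graph_def space_Tspace NTrees_def by auto
    show "rel_graph Tspace Rel \<subseteq> range G"
    proof
      fix x assume "x \<in> rel_graph Tspace Rel"
      then obtain S T where x: "x = (S, T)" "S \<in> NTrees" "T \<in> NTrees" "Rel S T"
        unfolding rel_graph_def space_Tspace by auto
      then obtain \<alpha> \<alpha>' where "Q S T \<alpha> \<alpha>'" using Rel_iff by blast
      obtain \<beta> where "tree_of_slice 0 \<beta> = S" "tree_of_slice 1 \<beta> = T" "slice 2 \<beta> = \<alpha>" "slice 3 \<beta> = \<alpha>'"
        using ex_code_of_trees by blast
      then have "G \<beta> = x"
        using x \<open>Q S T \<alpha> \<alpha>'\<close> unfolding G_def C_def NTrees_def by auto
      then show "x \<in> range G" by (metis rangeI)
    qed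
  qed
  moreover have "rel_graph Tspace Rel \<subseteq> space (Tspace \<Otimes>\<^sub>M Tspace)"
    unfolding rel_graph_def space_pair_measure by auto
  ultimately show ?thesis
    unfolding analytic_rel_def analytic_set_def by blast
qed

lemma analytic_rel_le_S: "analytic_rel Tspace le_S"
  by (rule analytic_rel_TspaceI[where Q = "\<lambda>S T \<alpha> \<alpha>'. le_S_witness S T \<alpha>"])
    (auto simp: pred_le_S_witness le_S_iff_witness[symmetric] le_S_refl)

lemma analytic_rel_eq_S: "analytic_rel Tspace eq_S"
proof (rule analytic_rel_TspaceI[where Q = "\<lambda>S T \<alpha> \<alpha>'. le_S_witness S T \<alpha> \<and> le_S_witness T S \<alpha>'"])
  have [measurable]:
    "Measurable.pred borel (\<lambda>\<beta>. le_S_witness (tree_of_slice i \<beta>) (tree_of_slice j \<beta>) (slice k \<beta>))"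
    for i j k
    by (rule pred_le_S_witness)
  show "Measurable.pred borel (\<lambda>\<beta>. le_S_witness (tree_of_slice 0 \<beta>) (tree_of_slice 1 \<beta>) (slice 2 \<beta>) \<and>
      le_S_witness (tree_of_slice 1 \<beta>) (tree_of_slice 0 \<beta>) (slice 3 \<beta>))"
    by measurable
qed (auto simp: eq_S_def le_S_iff_witness le_S_refl[unfolded le_S_iff_witness])

section \<open>Completeness\<close>

lemma quasiorder_on_le_S: "quasiorder_on (space Tspace) le_S"
  unfolding quasiorder_on_def using le_S_refl le_S_trans by blast

lemma equivalence_on_eq_S: "equivalence_on (space Tspace) eq_S"
  unfolding equivalence_on_def quasiorder_on_def eq_S_def using le_S_refl le_S_trans by blast

lemma C_qo_le_S: "C_qo Tspace le_S"
  unfolding C_qo_def using standard_borel_Tspace quasiorder_on_le_S analytic_rel_le_S by blast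

lemma C_eq_eq_S: "C_eq Tspace eq_S"
  unfolding C_eq_def using standard_borel_Tspace equivalence_on_eq_S analytic_rel_eq_S by blast

lemma disj_S_imp_neq_S: "disj_S S T \<Longrightarrow> neq_S S T"
  unfolding disj_S_def neq_S_def by auto

lemma complete_b_identity:
  assumes "C Tspace R" and "\<And>S T. R2 S T \<Longrightarrow> \<not> R S T"
  shows "complete_b C R R2"
proof -
  have "(\<lambda>T. T) \<in> Tspace \<rightarrow>\<^sub>M Tspace" by simp
  then show ?thesis unfolding complete_b_def borel_hom_def using assms by blast
qed

lemma complete_a_C_qo: "complete_a C_qo le_S nsub_S"
  unfolding complete_a_def borel_hom_def
proof (intro allI impI)
  fix M :: "'a measure" and R
  assume "C_qo M R"
  then have refl: "R x x" if "x \<in> space M" for x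
    using that unfolding C_qo_def quasiorder_on_def by blast
  from \<open>C_qo M R\<close> show "\<exists>f. f \<in> M \<rightarrow>\<^sub>M Tspace \<and> (\<forall>x\<in>space M. \<forall>y\<in>space M.
      (R x y \<longrightarrow> le_S (f x) (f y)) \<and> (\<not> R x y \<longrightarrow> nsub_S (f x) (f y)))"
  proof (elim quasiorder_reduction_to_trees)
    fix f :: "'a \<Rightarrow> tree" and e :: "'a \<Rightarrow> nat \<Rightarrow> bool"
    assume f: "f \<in> M \<rightarrow>\<^sub>M Tspace" "inj_on e (space M)"
      "\<And>x y. x \<in> space M \<Longrightarrow> y \<in> space M \<Longrightarrow> R x y \<Longrightarrow> le_S (f x) (f y)"
      "\<And>x. x \<in> space M \<Longrightarrow> A_of (f x) = e ` {z \<in> space M. R z x}"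
    have "nsub_S (f x) (f y)" if "x \<in> space M" "y \<in> space M" "\<not> R x y" for x y
    proof -
      have "e x \<in> A_of (f x)" using f(4) refl that by auto
      moreover have "e x \<notin> A_of (f y)"
        using f(2,4) that unfolding inj_on_def by auto
      ultimately show ?thesis unfolding nsub_S_def by blast
    qed
    then show ?thesis using f by blast
  qed
qed

lemma complete_b_C_qo: "complete_b C_qo le_S nsub_S"
  using C_qo_le_S by (rule complete_b_identity) (use le_S_imp_A_of_subset in \<open>auto simp: nsub_S_def\<close>)

lemma equivalence_reduction_to_trees:
  fixes M :: "'a measure"
  assumes "C_eq M R"
  shows "\<exists>f. f \<in> M \<rightarrow>\<^sub>M Tspace \<and> (\<forall>x\<in>space M. \<forall>y\<in>space M.
     (R x y \<longrightarrow> eq_S (f x) (f y)) \<and> (\<not> R x y \<longrightarrow> disj_S (f x) (f y)))"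
proof -
  have "C_qo M R" using assms unfolding C_eq_def C_qo_def equivalence_on_def by auto
  have refl: "\<And>x. x \<in> space M \<Longrightarrow> R x x"
    and sym: "\<And>x y. x \<in> space M \<Longrightarrow> y \<in> space M \<Longrightarrow> R x y \<Longrightarrow> R y x"
    and trans: "\<And>x y z. x \<in> space M \<Longrightarrow> y \<in> space M \<Longrightarrow> z \<in> space M \<Longrightarrow>
      R x y \<Longrightarrow> R y z \<Longrightarrow> R x z"
    using assms unfolding C_eq_def equivalence_on_def quasiorder_on_def by blast+
  from \<open>C_qo M R\<close> show ?thesis
  proof (elim quasiorder_reduction_to_trees)
    fix f :: "'a \<Rightarrow> tree" and e :: "'a \<Rightarrow> nat \<Rightarrow> bool"
    assume f: "f \<in> M \<rightarrow>\<^sub>M Tspace" "inj_on e (space M)"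
      "\<And>x y. x \<in> space M \<Longrightarrow> y \<in> space M \<Longrightarrow> R x y \<Longrightarrow> le_S (f x) (f y)"
      "\<And>x. x \<in> space M \<Longrightarrow> A_of (f x) = e ` {z \<in> space M. R z x}"
    have "eq_S (f x) (f y)" if "x \<in> space M" "y \<in> space M" "R x y" for x y
      using f(3) sym that unfolding eq_S_def by blast
    moreover have "disj_S (f x) (f y)" if xy: "x \<in> space M" "y \<in> space M" "\<not> R x y" for x y
    proof -
      have "e x \<in> A_of (f x)" "e y \<in> A_of (f y)" using f(4) refl xy by auto
      moreover have "A_of (f x) \<inter> A_of (f y) = {}"
      proof (rule ccontr)
        assume "A_of (f x) \<inter> A_of (f y) \<noteq> {}"
        then obtain z1 z2 where z: "z1 \<in> space M" "R z1 x" "z2 \<in> space M" "R z2 y" "e z1 = e z2"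
          using f(4) xy by fastforce
        then have "z1 = z2" using f(2) unfolding inj_on_def by blast
        then have "R x z2" using sym z xy by blast
        then show False using trans z xy by blast
      qed
      ultimately show ?thesis unfolding disj_S_def by blast
    qed
    ultimately show ?thesis using f(1) by blast
  qed
qed

lemma complete_a_C_eq_disj_S: "complete_a C_eq eq_S disj_S"
  unfolding complete_a_def borel_hom_def using equivalence_reduction_to_trees by blast

lemma complete_a_mono:
  assumes "complete_a C R1 R2" and "\<And>S T. R2 S T \<Longrightarrow> R2' S T"
  shows "complete_a C R1 R2'"
  using assms unfolding complete_a_def borel_hom_def by blast

lemma complete_b_antimono:
  assumes "complete_b C R1 R2" and "\<And>S T. R2' S T \<Longrightarrow> R2 S T"
  shows "complete_b C R1 R2'"
  using assms unfolding complete_b_def borel_hom_def by blast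

lemma complete_a_C_eq_neq_S: "complete_a C_eq eq_S neq_S"
  using complete_a_C_eq_disj_S disj_S_imp_neq_S by (rule complete_a_mono)

lemma complete_b_C_eq_neq_S: "complete_b C_eq eq_S neq_S"
  using C_eq_eq_S by (rule complete_b_identity) (use eq_S_imp_A_of_eq in \<open>auto simp: neq_S_def\<close>)

lemma complete_b_C_eq_disj_S: "complete_b C_eq eq_S disj_S"
  using complete_b_C_eq_neq_S disj_S_imp_neq_S by (rule complete_b_antimono)

theorem mainTheorem1:
  shows "(complete_a (C_qo :: 'a measure \<Rightarrow> _) le_S nsub_S \<and> complete_b C_qo le_S nsub_S)
       \<and> (complete_a (C_eq :: 'b measure \<Rightarrow> _) eq_S disj_S \<and> complete_b C_eq eq_S disj_S)
       \<and> (complete_a (C_eq :: 'c measure \<Rightarrow> _) eq_S neq_S \<and> complete_b C_eq eq_S neq_S)"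
  using complete_a_C_qo complete_b_C_qo complete_a_C_eq_disj_S complete_b_C_eq_disj_S
    complete_a_C_eq_neq_S complete_b_C_eq_neq_S by blast

end
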